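(* Let $W$ be a $\mathcal{T}$-module such that the restriction of $W$ to $\mathcal{U}(\mathfrak{t})$, where $\mathfrak{t}=\mathbb{C}L_0$, is free of rank $2$. Then there exist $\lambda\in\mathbb{C}^*$ and $\alpha\in\mathbb{C}$ such that $W$ or $\Pi(W)$ is isomorphic to $\mathcal{N}_1(\lambda,\alpha)$ or to $\mathcal{N}_{-1}(\lambda,\alpha)$.
   Context: The twisted $N=2$ superconformal algebra $\mathcal{T}$ is the Lie superalgebra over $\mathbb{C}$ with basis $\{L_m, I_r, G_p\mid m\in\mathbb{Z}, r\in\frac12+\mathbb{Z}, p\in\frac12\mathbb{Z}\}$, even part spanned by the $L_m,I_r$, odd part by the $G_p$, only nonzero brackets $[L_m,L_n]=(m-n)L_{m+n}$, $[L_m,I_r]=-rI_{m+r}$, $[L_m,G_p]=(\frac m2-p)G_{m+p}$, $[I_r,G_p]=G_{r+p}$, $[G_p,G_q]=(-1)^{2p}2L_{p+q}$ if $p+q\in\mathbb{Z}$, $[G_p,G_q]=(-1)^{2p+1}(p-q)I_{p+q}$ if $p+q\in\frac12+\mathbb{Z}$. Modules are $\mathbb{Z}_2$-graded; $\Pi$ is the parity-change functor. For $p\in\frac12\mathbb{Z}$, $\lambda^p$ means $(\lambda^{1/2})^{2p}$ for a fixed square root. For $\lambda\in\mathbb{C}^*,\alpha\in\mathbb{C},t=\pm1$, $\mathcal{N}_t(\lambda,\alpha)$ is the space $\mathbb{C}[x]\mathbf{1}_{\bar0}\oplus\mathbb{C}[y]\mathbf{1}_{\bar1}$ (even part $\mathbb{C}[x]\mathbf{1}_{\bar0}$,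 odd part $\mathbb{C}[y]\mathbf{1}_{\bar1}$; write $f(x)$ for $f(x)\mathbf{1}_{\bar0}$, $g(y)$ for $g(y)\mathbf{1}_{\bar1}$) with $L_mf(x)=\lambda^m(x+m\alpha)f(x+m)$, $L_mg(y)=\lambda^m(y+m(\alpha+\frac12))g(y+m)$, $I_rf(x)=-2t^{2r}\lambda^r\alpha f(x+r)$, $I_rg(y)=t^{2r}\lambda^r(1-2\alpha)g(y+r)$, $G_pf(x)=t^{2p}\lambda^pf(y+p)$, $G_pg(y)=(-t)^{2p}\lambda^p(x+2p\alpha)g(x+p)$, for $m\in\mathbb{Z}$, $r\in\frac12+\mathbb{Z}$, $p\in\frac12\mathbb{Z}$. *)

theory Defs
  imports Complex_Main "HOL-Library.Product_Plus" "HOL-Computational_Algebra.Polynomial"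
begin

(* Index convention: half-integer indices are encoded by their doubles.
   I k (k odd) stands for I_{k/2};  G k (k any integer) stands for G_{k/2}.
   L m (m integer) stands for L_m. *)

(* Relations (bracket = supercommutator):
   [L_m,L_n]=(m-n)L_{m+n}; [L_m,I_r]=-r I_{m+r}; [L_m,G_p]=(m/2-p)G_{m+p};
   [I_r,I_s]=0; [I_r,G_p]=G_{r+p};
   G_pG_q+G_qG_p = (-1)^{2p} 2 L_{p+q} (p+q integral),
                 = (-1)^{2p+1}(p-q) I_{p+q} (p+q half-odd). *)
definition tmod ::
  "(complex \<Rightarrow> 'v::ab_group_add \<Rightarrow> 'v) \<Rightarrow> 'v set \<Rightarrow> 'v set \<Rightarrow>
   (int \<Rightarrow> 'v \<Rightarrow> 'v) \<Rightarrow> (int \<Rightarrow> 'v \<Rightarrow> 'v) \<Rightarrow> (int \<Rightarrow> 'v \<Rightarrow> 'v) \<Rightarrow> bool" where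
  "tmod sc V0 V1 L I G \<longleftrightarrow>
     vector_space sc \<and>
     module.subspace sc V0 \<and> module.subspace sc V1 \<and> V0 \<inter> V1 = {0} \<and>
     (\<forall>v. \<exists>a\<in>V0. \<exists>b\<in>V1. v = a + b) \<and>
     (\<forall>m. Vector_Spaces.linear sc sc (L m)) \<and>
     (\<forall>k. odd k \<longrightarrow> Vector_Spaces.linear sc sc (I k)) \<and>
     (\<forall>k. Vector_Spaces.linear sc sc (G k)) \<and>
     (\<forall>m. L m ` V0 \<subseteq> V0 \<and> L m ` V1 \<subseteq> V1) \<and>
     (\<forall>k. odd k \<longrightarrow> I k ` V0 \<subseteq> V0 \<and> I k ` V1 \<subseteq> V1) \<and>
     (\<forall>k. G k ` V0 \<subseteq> V1 \<and> G k ` V1 \<subseteq> V0) \<and>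
     (\<forall>m n v. L m (L n v) - L n (L m v) = sc (of_int (m - n)) (L (m + n) v)) \<and>
     (\<forall>m k v. odd k \<longrightarrow>
        L m (I k v) - I k (L m v) = sc (- of_int k / 2) (I (2 * m + k) v)) \<and>
     (\<forall>m k v. L m (G k v) - G k (L m v) = sc (of_int (m - k) / 2) (G (2 * m + k) v)) \<and>
     (\<forall>j k v. odd j \<longrightarrow> odd k \<longrightarrow> I j (I k v) - I k (I j v) = 0) \<and>
     (\<forall>j k v. odd j \<longrightarrow> I j (G k v) - G k (I j v) = G (j + k) v) \<and>
     (\<forall>j k v. even (j + k) \<longrightarrow>
        G j (G k v) + G k (G j v) = sc ((-1) powi j * 2) (L ((j + k) div 2) v)) \<and>
     (\<forall>j k v. odd (j + k) \<longrightarrow>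
        G j (G k v) + G k (G j v) =
          sc ((-1) powi (j + 1) * (of_int (j - k) / 2)) (I (j + k) v))"

definition tiso ::
  "(complex \<Rightarrow> 'v::ab_group_add \<Rightarrow> 'v) \<Rightarrow> 'v set \<Rightarrow> 'v set \<Rightarrow>
   (int \<Rightarrow> 'v \<Rightarrow> 'v) \<Rightarrow> (int \<Rightarrow> 'v \<Rightarrow> 'v) \<Rightarrow> (int \<Rightarrow> 'v \<Rightarrow> 'v) \<Rightarrow>
   (complex \<Rightarrow> 'w::ab_group_add \<Rightarrow> 'w) \<Rightarrow> 'w set \<Rightarrow> 'w set \<Rightarrow>
   (int \<Rightarrow> 'w \<Rightarrow> 'w) \<Rightarrow> (int \<Rightarrow> 'w \<Rightarrow> 'w) \<Rightarrow> (int \<Rightarrow> 'w \<Rightarrow> 'w) \<Rightarrow> bool" where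
  "tiso sc V0 V1 L I G sc' W0 W1 L' I' G' \<longleftrightarrow>
     (\<exists>\<phi>. Vector_Spaces.linear sc sc' \<phi> \<and> bij \<phi> \<and>
        \<phi> ` V0 = W0 \<and> \<phi> ` V1 = W1 \<and>
        (\<forall>m v. \<phi> (L m v) = L' m (\<phi> v)) \<and>
        (\<forall>k v. odd k \<longrightarrow> \<phi> (I k v) = I' k (\<phi> v)) \<and>
        (\<forall>k v. \<phi> (G k v) = G' k (\<phi> v)))"

definition polyact :: "(complex \<Rightarrow> 'v::ab_group_add \<Rightarrow> 'v) \<Rightarrow> ('v \<Rightarrow> 'v) \<Rightarrow> complex poly \<Rightarrow> 'v \<Rightarrow> 'v" where
  "polyact sc A p v = (\<Sum>i\<le>degree p. sc (coeff p i) ((A ^^ i) v))"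

definition free_rank2_L0 :: "(complex \<Rightarrow> 'v::ab_group_add \<Rightarrow> 'v) \<Rightarrow> (int \<Rightarrow> 'v \<Rightarrow> 'v) \<Rightarrow> bool" where
  "free_rank2_L0 sc L \<longleftrightarrow>
     (\<exists>w1 w2. \<forall>w. \<exists>!pq :: complex poly \<times> complex poly.
        w = polyact sc (L 0) (fst pq) w1 + polyact sc (L 0) (snd pq) w2)"

(* The module N_t(lambda, alpha): space C[x] (+) C[y] as pairs (f, g). *)
definition Nsc :: "complex \<Rightarrow> complex poly \<times> complex poly \<Rightarrow> complex poly \<times> complex poly" where
  "Nsc c fg = (smult c (fst fg), smult c (snd fg))"

definition Neven :: "(complex poly \<times> complex poly) set" where
  "Neven = {(f, 0) | f. True}"

definition Nodd :: "(complex poly \<times> complex poly) set" where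
  "Nodd = {(0, g) | g. True}"

(* lampow lam k = lambda^(k/2) := (csqrt lambda)^k, fixed square root csqrt *)
definition lampow :: "complex \<Rightarrow> int \<Rightarrow> complex" where
  "lampow lam k = csqrt lam powi k"

definition pshift :: "complex poly \<Rightarrow> complex \<Rightarrow> complex poly" where
  "pshift f c = pcompose f [:c, 1:]"

definition NL :: "complex \<Rightarrow> complex \<Rightarrow> int \<Rightarrow> complex poly \<times> complex poly \<Rightarrow> complex poly \<times> complex poly" where
  "NL lam al m fg =
     (smult (lampow lam (2 * m)) ([:of_int m * al, 1:] * pshift (fst fg) (of_int m)),
      smult (lampow lam (2 * m)) ([:of_int m * (al + 1/2), 1:] * pshift (snd fg) (of_int m)))"

definition NI :: "complex \<Rightarrow> complex \<Rightarrow> complex \<Rightarrow> int \<Rightarrow> complex poly \<times> complex poly \<Rightarrow> complex poly \<times> complex poly" where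
  "NI t lam al k fg =
     (smult (- 2 * (t powi k) * lampow lam k * al) (pshift (fst fg) (of_int k / 2)),
      smult ((t powi k) * lampow lam k * (1 - 2 * al)) (pshift (snd fg) (of_int k / 2)))"

(* G k = G_{k/2}: G_p f(x) = t^{2p} lam^p f(y+p),  G_p g(y) = (-t)^{2p} lam^p (x + 2p al) g(x+p) *)
definition NG :: "complex \<Rightarrow> complex \<Rightarrow> complex \<Rightarrow> int \<Rightarrow> complex poly \<times> complex poly \<Rightarrow> complex poly \<times> complex poly" where
  "NG t lam al k fg =
     (smult (((- t) powi k) * lampow lam k) ([:of_int k * al, 1:] * pshift (snd fg) (of_int k / 2)),
      smult ((t powi k) * lampow lam k) (pshift (fst fg) (of_int k / 2)))"

end

theory Submission
  imports Defs "HOL-Computational_Algebra.Polynomial_Factorial" "HOL-Computational_Algebra.Field_as_Ring"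
begin

(* Write x = L_0. Since G_0 G_0 = L_0 and the module is free of rank two over C[x], it is
   torsion-free and G_0 is injective. The even part is generated by the even components u_1, u_2
   of a basis; the three elements u_1, u_2, G_0 u_1 are dependent over C[x], and splitting a
   relation into even and odd parts gives a relation between u_1 and u_2, whence (Bezout) the
   even part is cyclic, and likewise the odd part. If G_0 e_0 = g e_1 and G_0 e_1 = h e_0 for
   generators e_0, e_1, then g h = x, so g or h is a nonzero constant: after possibly changing
   the parity we may take e_1 = G_0 e_0.

   Every generator of the algebra now acts by f(x) e |-> f(x + shift) c(x) e' for a structure
   polynomial c, and the defining relations become functional equations between these
   polynomials. Using that a polynomial with a nonzero period is constant and comparing
   degrees, they force G_k e_0 = s^k e_1, L_m e_0 = lambda^m (x + m alpha) e_0 etc. with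
   s^2 = lambda, which are exactly the formulas of N_t(lambda, alpha), t = +-1 comparing s
   with the fixed square root of lambda. *)

section \<open>Polynomials in a linear operator\<close>

locale poly_operator = vector_space sc for sc :: "complex \<Rightarrow> 'v::ab_group_add \<Rightarrow> 'v" +
  fixes A :: "'v \<Rightarrow> 'v"
  assumes linear_A: "Vector_Spaces.linear sc sc A"
begin

sublocale vector_space_pair sc sc by unfold_locales

abbreviation pact :: "complex poly \<Rightarrow> 'v \<Rightarrow> 'v" where
  "pact p v \<equiv> polyact sc A p v"

lemma pact_0 [simp]: "pact 0 v = 0"
  by (simp add: polyact_def)

lemma pact_pCons: "pact (pCons a p) v = sc a v + pact p (A v)"
proof -
  have "pact (pCons a p) v = (\<Sum>i\<le>Suc (degree p). sc (coeff (pCons a p) i) ((A ^^ i) v))"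
    unfolding polyact_def
    by (rule sum.mono_neutral_left) (auto simp: coeff_eq_0 degree_pCons_le)
  also have "\<dots> = sc a v + (\<Sum>i\<le>degree p. sc (coeff p i) ((A ^^ Suc i) v))"
    by (subst sum.atMost_Suc_shift) simp
  also have "(\<Sum>i\<le>degree p. sc (coeff p i) ((A ^^ Suc i) v)) = pact p (A v)"
    unfolding polyact_def by (simp add: funpow_Suc_right del: funpow.simps)
  finally show ?thesis .
qed

lemma pact_const [simp]: "pact [:c:] v = sc c v"
  by (simp add: pact_pCons)

lemma pact_1 [simp]: "pact 1 v = v"
  by (simp add: one_pCons pact_pCons)

lemma pact_linear_poly: "pact [:c, 1:] v = sc c v + A v"
  by (simp add: pact_pCons)

lemma pact_x: "pact [:0, 1:] v = A v"
  by (simp add: pact_pCons)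

lemma pact_add: "pact p (v + w) = pact p v + pact p w"
  by (induction p arbitrary: v w)
    (simp_all add: pact_pCons linear_add[OF linear_A] algebra_simps)

lemma pact_scale: "pact p (sc c v) = sc c (pact p v)"
  by (induction p arbitrary: v)
    (simp_all add: pact_pCons linear_scale[OF linear_A] scale_right_distrib mult.commute)

lemma pact_zero [simp]: "pact p 0 = 0"
  using pact_scale[of p 0 0] by simp

lemma pact_minus: "pact p (- v) = - pact p v"
  using pact_scale[of p "-1" v] by simp

lemma pact_diff: "pact p (v - w) = pact p v - pact p w"
  using pact_add[of p v "-w"] pact_minus[of p w] by simp

lemma pact_poly_add: "pact (p + q) v = pact p v + pact q v"
proof (induction p arbitrary: q v)
  case (pCons a p)
  obtain b q' where "q = pCons b q'" by (cases q) auto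
  then show ?case using pCons.IH[of q' "A v"] by (simp add: pact_pCons algebra_simps)
qed simp

lemma pact_smult: "pact (smult c p) v = sc c (pact p v)"
  by (induction p arbitrary: v)
    (simp_all add: pact_pCons scale_right_distrib)

lemma pact_poly_minus: "pact (- p) v = - pact p v"
  using pact_smult[of "-1" p v] by simp

lemma pact_poly_diff: "pact (p - q) v = pact p v - pact q v"
  using pact_poly_add[of p "-q" v] pact_poly_minus[of q v] by simp

lemma linear_commute_pact:
  assumes T: "Vector_Spaces.linear sc sc T" and comm: "\<And>v. T (A v) = A (T v)"
  shows "T (pact p v) = pact p (T v)"
  by (induction p arbitrary: v)
    (simp_all add: pact_pCons linear_0[OF T] linear_add[OF T] linear_scale[OF T] comm)

lemma pact_mult: "pact (p * q) v = pact p (pact q v)"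
  by (induction p arbitrary: v)
    (simp_all add: pact_pCons pact_poly_add pact_smult linear_commute_pact[OF linear_A])

lemma pact_commute: "pact p (pact q v) = pact q (pact p v)"
  by (simp flip: pact_mult add: mult.commute)

lemma pact_shift:
  assumes T: "Vector_Spaces.linear sc sc T" and comm: "\<And>v. T (A v) = A (T v) + sc c (T v)"
  shows "T (pact p v) = pact (pshift p c) (T v)"
  unfolding pshift_def
proof (induction p arbitrary: v)
  case (pCons a p)
  show ?case
    by (simp add: pact_pCons linear_add[OF T] linear_scale[OF T] pCons.IH comm pcompose_pCons
        pact_poly_add pact_mult pact_add pact_scale pact_linear_poly linear_commute_pact[OF linear_A]
        pact_smult algebra_simps)
qed (simp add: linear_0[OF T])

definition generates :: "'v set \<Rightarrow> 'v \<Rightarrow> bool" where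
  "generates S e \<longleftrightarrow> (\<forall>v\<in>S. \<exists>f. v = pact f e)"

lemma generates_scale:
  assumes "generates S e" "c \<noteq> 0"
  shows "generates S (sc c e)"
  unfolding generates_def
proof
  fix v assume "v \<in> S"
  then obtain f where "v = pact f e" using assms(1) by (auto simp: generates_def)
  then have "v = pact (smult (1 / c) f) (sc c e)" using assms(2)
    by (simp add: pact_scale pact_smult)
  then show "\<exists>f. v = pact f (sc c e)" by blast
qed

lemma pact_in_subspace:
  assumes "subspace S" and "\<And>x. x \<in> S \<Longrightarrow> A x \<in> S" and "v \<in> S"
  shows "pact p v \<in> S"
  using assms(3)
  by (induction p arbitrary: v)
    (simp_all add: pact_pCons assms(1,2) subspace_0 subspace_add subspace_scale)

end

lemma common_nontrivial_zero_2x3: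
  fixes p1 p2 p3 q1 q2 q3 :: "'a::idom"
  shows "\<exists>f1 f2 f3. (f1 \<noteq> 0 \<or> f2 \<noteq> 0 \<or> f3 \<noteq> 0) \<and>
           f1 * p1 + f2 * p2 + f3 * p3 = 0 \<and> f1 * q1 + f2 * q2 + f3 * q3 = 0"
proof -
  consider "p2 * q3 \<noteq> p3 * q2 \<or> p3 * q1 \<noteq> p1 * q3 \<or> p1 * q2 \<noteq> p2 * q1"
    | "p1 * q2 = p2 * q1" "q1 \<noteq> 0 \<or> q2 \<noteq> 0"
    | "q1 = 0" "q2 = 0" "p1 \<noteq> 0 \<or> p2 \<noteq> 0"
    | "p1 = 0" "p2 = 0" "q1 = 0" "q2 = 0"
    by blast
  then show ?thesis
  proof cases
    case 1
    \<comment> \<open>the cross product of the two rows\<close>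
    then show ?thesis
      by (rule_tac x = "p2 * q3 - p3 * q2" in exI, rule_tac x = "p3 * q1 - p1 * q3" in exI,
          rule_tac x = "p1 * q2 - p2 * q1" in exI) (auto simp: algebra_simps)
  next
    case 2
    then show ?thesis
      by (rule_tac x = q2 in exI, rule_tac x = "- q1" in exI, rule_tac x = 0 in exI)
        (auto simp: algebra_simps)
  next
    case 3
    then show ?thesis
      by (rule_tac x = p2 in exI, rule_tac x = "- p1" in exI, rule_tac x = 0 in exI)
        (auto simp: algebra_simps)
  next
    case 4
    then show ?thesis by (rule_tac x = 1 in exI, rule_tac x = 0 in exI, rule_tac x = 0 in exI) simp
  qed
qed

section \<open>Graded modules over the twisted N=2 algebra\<close>

lemma tmod_swap: "tmod sc V0 V1 L I G \<Longrightarrow> tmod sc V1 V0 L I G"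
  unfolding tmod_def apply (intro conjI; (elim conjE)?)
  apply (auto simp: Int_commute)
  by (metis add.commute)

locale tmodule =
  fixes sc :: "complex \<Rightarrow> 'v::ab_group_add \<Rightarrow> 'v" and V0 V1 :: "'v set"
    and L I G :: "int \<Rightarrow> 'v \<Rightarrow> 'v"
  assumes tmod: "tmod sc V0 V1 L I G"
begin

lemma tmod_conjuncts:
  "vector_space sc"
  "module.subspace sc V0" "module.subspace sc V1" "V0 \<inter> V1 = {0}"
  "\<forall>v. \<exists>a\<in>V0. \<exists>b\<in>V1. v = a + b"
  "\<forall>m. Vector_Spaces.linear sc sc (L m)"
  "\<forall>k. odd k \<longrightarrow> Vector_Spaces.linear sc sc (I k)"
  "\<forall>k. Vector_Spaces.linear sc sc (G k)"
  "\<forall>m. L m ` V0 \<subseteq> V0 \<and> L m ` V1 \<subseteq> V1"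
  "\<forall>k. odd k \<longrightarrow> I k ` V0 \<subseteq> V0 \<and> I k ` V1 \<subseteq> V1"
  "\<forall>k. G k ` V0 \<subseteq> V1 \<and> G k ` V1 \<subseteq> V0"
  "\<forall>m n v. L m (L n v) - L n (L m v) = sc (of_int (m - n)) (L (m + n) v)"
  "\<forall>m k v. odd k \<longrightarrow> L m (I k v) - I k (L m v) = sc (- of_int k / 2) (I (2 * m + k) v)"
  "\<forall>m k v. L m (G k v) - G k (L m v) = sc (of_int (m - k) / 2) (G (2 * m + k) v)"
  "\<forall>j k v. odd j \<longrightarrow> odd k \<longrightarrow> I j (I k v) - I k (I j v) = 0"
  "\<forall>j k v. odd j \<longrightarrow> I j (G k v) - G k (I j v) = G (j + k) v"
  "\<forall>j k v. even (j + k) \<longrightarrow>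
     G j (G k v) + G k (G j v) = sc ((-1) powi j * 2) (L ((j + k) div 2) v)"
  "\<forall>j k v. odd (j + k) \<longrightarrow>
     G j (G k v) + G k (G j v) = sc ((-1) powi (j + 1) * (of_int (j - k) / 2)) (I (j + k) v)"
  using tmod[unfolded tmod_def] by - (elim conjE, assumption)+

lemma vector_space: "vector_space sc"
  and subspace_V0: "module.subspace sc V0" and subspace_V1: "module.subspace sc V1"
  and V0_Int_V1: "V0 \<inter> V1 = {0}"
  using tmod_conjuncts by simp_all

lemma V0_plus_V1: "\<exists>a\<in>V0. \<exists>b\<in>V1. v = a + b"
  using tmod_conjuncts(5) by blast
lemma linear_L: "Vector_Spaces.linear sc sc (L m)"
  using tmod_conjuncts(6) by blast
lemma linear_I: "odd k \<Longrightarrow> Vector_Spaces.linear sc sc (I k)"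
  using tmod_conjuncts(7) by blast
lemma linear_G: "Vector_Spaces.linear sc sc (G k)"
  using tmod_conjuncts(8) by blast
lemma L_V0: "v \<in> V0 \<Longrightarrow> L m v \<in> V0" and L_V1: "v \<in> V1 \<Longrightarrow> L m v \<in> V1"
  using tmod_conjuncts(9) by blast+
lemma I_V0: "odd k \<Longrightarrow> v \<in> V0 \<Longrightarrow> I k v \<in> V0" and I_V1: "odd k \<Longrightarrow> v \<in> V1 \<Longrightarrow> I k v \<in> V1"
  using tmod_conjuncts(10) by blast+
lemma G_V0: "v \<in> V0 \<Longrightarrow> G k v \<in> V1" and G_V1: "v \<in> V1 \<Longrightarrow> G k v \<in> V0"
  using tmod_conjuncts(11) by blast+
lemma comm_L_L: "L m (L n v) - L n (L m v) = sc (of_int (m - n)) (L (m + n) v)"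
  using tmod_conjuncts(12) by blast
lemma comm_L_I: "odd k \<Longrightarrow> L m (I k v) - I k (L m v) = sc (- of_int k / 2) (I (2 * m + k) v)"
  using tmod_conjuncts(13) by blast
lemma comm_L_G: "L m (G k v) - G k (L m v) = sc (of_int (m - k) / 2) (G (2 * m + k) v)"
  using tmod_conjuncts(14) by blast
lemma comm_I_I: "odd j \<Longrightarrow> odd k \<Longrightarrow> I j (I k v) - I k (I j v) = 0"
  using tmod_conjuncts(15) by blast
lemma anticomm_G_G_int: "even (j + k) \<Longrightarrow>
    G j (G k v) + G k (G j v) = sc ((-1) powi j * 2) (L ((j + k) div 2) v)"
  using tmod_conjuncts(17) by blast
lemma anticomm_G_G_half: "odd (j + k) \<Longrightarrow>
    G j (G k v) + G k (G j v) = sc ((-1) powi (j + 1) * (of_int (j - k) / 2)) (I (j + k) v)"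
  using tmod_conjuncts(18) by blast

sublocale poly_operator sc "L 0"
  by (rule poly_operator.intro[OF vector_space poly_operator_axioms.intro[OF linear_L]])

lemma graded_sum_eq_0:
  assumes "a \<in> V0" "b \<in> V1" "a + b = 0"
  shows "a = 0" "b = 0"
proof -
  have "a = - b" using assms(3) by (simp add: eq_neg_iff_add_eq_0)
  then have "a \<in> V1" using subspace_neg[OF subspace_V1 assms(2)] by simp
  then show "a = 0" using assms(1) V0_Int_V1 by auto
  then show "b = 0" using assms(3) by simp
qed

lemma add_self_eq_scale_2D: "x + x = sc 2 u \<Longrightarrow> x = u"
proof -
  assume h: "x + x = sc 2 u"
  have "sc 2 x = sc (1 + 1) x" by simp
  also have "\<dots> = x + x" by (simp only: scale_left_distrib scale_one)
  finally have "sc 2 x = sc 2 u" using h by simp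
  then have "sc (1/2) (sc 2 x) = sc (1/2) (sc 2 u)" by simp
  then show "x = u" by (simp only: scale_scale) simp
qed

lemma G0_G0: "G 0 (G 0 v) = L 0 v"
proof (rule add_self_eq_scale_2D)
  show "G 0 (G 0 v) + G 0 (G 0 v) = sc 2 (L 0 v)"
    using anticomm_G_G_int[of 0 0 v] by simp
qed

lemma L_L0: "L m (L 0 v) = L 0 (L m v) + sc (of_int m) (L m v)"
  using comm_L_L[of m 0 v] by (simp add: diff_eq_eq add.commute)

lemma I_L0: "odd k \<Longrightarrow> I k (L 0 v) = L 0 (I k v) + sc (of_int k / 2) (I k v)"
  using comm_L_I[of k 0 v] scale_minus_left[of "of_int k / 2" "I k v"]
  by (simp add: diff_eq_eq eq_diff_eq)

lemma G_L0: "G k (L 0 v) = L 0 (G k v) + sc (of_int k / 2) (G k v)"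
  using comm_L_G[of 0 k v] scale_minus_left[of "of_int k / 2" "G k v"]
  by (simp add: diff_eq_eq eq_diff_eq)

lemma L_pact: "L m (pact f v) = pact (pshift f (of_int m)) (L m v)"
  by (rule pact_shift[OF linear_L L_L0])

lemma I_pact: "odd k \<Longrightarrow> I k (pact f v) = pact (pshift f (of_int k / 2)) (I k v)"
  by (rule pact_shift[OF linear_I I_L0])

lemma G_pact: "G k (pact f v) = pact (pshift f (of_int k / 2)) (G k v)"
  by (rule pact_shift[OF linear_G G_L0])

lemma G0_pact: "G 0 (pact f v) = pact f (G 0 v)"
  using G_pact[of 0 f v] by (simp add: pshift_def)

lemma pact_V0: "v \<in> V0 \<Longrightarrow> pact f v \<in> V0"
  by (rule pact_in_subspace[OF subspace_V0 L_V0])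

lemma pact_V1: "v \<in> V1 \<Longrightarrow> pact f v \<in> V1"
  by (rule pact_in_subspace[OF subspace_V1 L_V1])

end

section \<open>Modules that are free of rank two over \<open>\<complex>[L\<^sub>0]\<close>\<close>

locale free_tmodule = tmodule sc V0 V1 L I G
  for sc :: "complex \<Rightarrow> 'v::ab_group_add \<Rightarrow> 'v" and V0 V1 L I G +
  assumes free: "free_rank2_L0 sc L"
begin

lemma free_basis:
  obtains w1 w2 where "\<And>w. \<exists>p q. w = pact p w1 + pact q w2"
    and "\<And>p q. pact p w1 + pact q w2 = 0 \<Longrightarrow> p = 0 \<and> q = 0"
proof -
  obtain w1 w2 where unique: "\<And>w. \<exists>!pq. w = pact (fst pq) w1 + pact (snd pq) w2"
    using free unfolding free_rank2_L0_def by blast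
  show ?thesis
  proof (rule that)
    show "\<exists>p q. w = pact p w1 + pact q w2" for w
      using unique[of w] by auto
    show "p = 0 \<and> q = 0" if "pact p w1 + pact q w2 = 0" for p q
    proof -
      have "0 = pact (fst (p, q)) w1 + pact (snd (p, q)) w2" using that by simp
      moreover have "0 = pact (fst (0, 0)) w1 + pact (snd (0, 0)) w2" by simp
      ultimately have "(p, q) = (0, 0)" using unique[of 0] by blast
      then show ?thesis by simp
    qed
  qed
qed

lemma torsion_free:
  assumes "pact f v = 0" "f \<noteq> 0"
  shows "v = 0"
proof -
  obtain w1 w2 where span: "\<And>w. \<exists>p q. w = pact p w1 + pact q w2"
    and indep: "\<And>p q. pact p w1 + pact q w2 = 0 \<Longrightarrow> p = 0 \<and> q = 0"
    by (rule free_basis) blast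
  obtain p q where v: "v = pact p w1 + pact q w2" using span[of v] by blast
  have "pact (f * p) w1 + pact (f * q) w2 = 0"
    using assms(1) by (simp add: v pact_add pact_mult)
  then have "f * p = 0" "f * q = 0" using indep by blast+
  then show ?thesis using assms(2) by (simp add: v)
qed

lemma pact_cancel:
  assumes "pact f v = pact g v" "v \<noteq> 0"
  shows "f = g"
  using torsion_free[of "f - g" v] assms by (auto simp: pact_poly_diff)

lemma pact_twice_cancel:
  assumes "pact X v + pact X v = sc (c * 2) (pact Y v)" "v \<noteq> 0"
  shows "X = smult c Y"
proof -
  have "pact X v + pact X v = sc 2 (sc c (pact Y v))" using assms(1) by (simp add: mult.commute)
  then have "pact X v = sc c (pact Y v)" by (rule add_self_eq_scale_2D)
  then have "pact X v = pact (smult c Y) v" by (simp add: pact_smult)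
  then show ?thesis using pact_cancel assms(2) by blast
qed

lemma G0_eq_0D: "G 0 z = 0 \<Longrightarrow> z = 0"
  using torsion_free[of "[:0, 1:]" z] G0_G0[of z] linear_0[OF linear_G] by (simp add: pact_x)

lemma pact_relation3:
  "\<exists>f1 f2 f3. (f1 \<noteq> 0 \<or> f2 \<noteq> 0 \<or> f3 \<noteq> 0) \<and> pact f1 z1 + pact f2 z2 + pact f3 z3 = 0"
proof -
  obtain w1 w2 where span: "\<And>w. \<exists>p q. w = pact p w1 + pact q w2"
    by (rule free_basis) blast
  obtain p1 q1 where z1: "z1 = pact p1 w1 + pact q1 w2" using span[of z1] by blast
  obtain p2 q2 where z2: "z2 = pact p2 w1 + pact q2 w2" using span[of z2] by blast
  obtain p3 q3 where z3: "z3 = pact p3 w1 + pact q3 w2" using span[of z3] by blast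
  obtain f1 f2 f3 where f: "f1 \<noteq> 0 \<or> f2 \<noteq> 0 \<or> f3 \<noteq> 0"
    "f1 * p1 + f2 * p2 + f3 * p3 = 0" "f1 * q1 + f2 * q2 + f3 * q3 = 0"
    using common_nontrivial_zero_2x3[of p1 p2 p3 q1 q2 q3] by blast
  have "pact f1 z1 + pact f2 z2 + pact f3 z3
      = pact (f1 * p1 + f2 * p2 + f3 * p3) w1 + pact (f1 * q1 + f2 * q2 + f3 * q3) w2"
    unfolding z1 z2 z3 pact_add pact_poly_add pact_mult by (simp only: add_ac)
  also have "\<dots> = 0" using f by simp
  finally show ?thesis using f(1) by blast
qed

lemma nontrivial: "\<exists>w. w \<noteq> (0 :: 'v)"
proof (rule ccontr)
  assume trivial: "\<nexists>w. w \<noteq> (0 :: 'v)"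
  obtain w1 w2 where indep: "\<And>p q. pact p w1 + pact q w2 = 0 \<Longrightarrow> p = 0 \<and> q = 0"
    by (rule free_basis) blast
  have "pact 1 w1 + pact 0 w2 = 0" using trivial by simp
  then show False using indep[of 1 0] by simp
qed

lemma V0_nontrivial: "\<exists>v\<in>V0. v \<noteq> 0"
proof -
  obtain w :: 'v where w: "w \<noteq> 0" using nontrivial by blast
  obtain a b where ab: "a \<in> V0" "b \<in> V1" "w = a + b" using V0_plus_V1 by blast
  show ?thesis
  proof (cases "a = 0")
    case True
    then have "G 0 b \<noteq> 0" using w ab(3) G0_eq_0D by auto
    then show ?thesis using G_V1[OF ab(2)] by blast
  next
    case False
    then show ?thesis using ab(1) by blast
  qed
qed

lemma common_generator:
  assumes rel: "pact f1 u1 + pact f2 u2 = 0" and nz: "f1 \<noteq> 0 \<or> f2 \<noteq> 0"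
  obtains e x y r s where "e = pact x u2 - pact y u1" "u1 = pact r e" "u2 = pact s e"
proof -
  define d where "d = gcd f1 f2"
  have "d \<noteq> 0" using nz by (simp add: d_def)
  obtain r s where r: "f1 = d * r" and s: "f2 = d * s"
    using gcd_dvd1[of f1 f2] gcd_dvd2[of f1 f2] unfolding d_def dvd_def by blast
  obtain x y where "x * f1 + y * f2 = d"
    using bezout_coefficients_fst_snd[of f1 f2] unfolding d_def by blast
  then have "d * (x * r + y * s) = d * 1" using r s by (simp add: algebra_simps)
  then have xyrs: "x * r + y * s = 1" using \<open>d \<noteq> 0\<close>
    by (simp only: mult_cancel_left) simp
  have "pact d (pact r u1 + pact s u2) = 0" using rel by (simp add: r s pact_add pact_mult)
  then have rs: "pact r u1 + pact s u2 = 0" using \<open>d \<noteq> 0\<close> torsion_free by blast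
  then have su2: "pact s u2 = - pact r u1" and ru1: "pact r u1 = - pact s u2"
    by (simp_all add: eq_neg_iff_add_eq_0 add.commute)
  define e where "e = pact x u2 - pact y u1"
  have "pact (- s) e = pact x (- pact s u2) + pact y (pact s u1)"
    by (simp add: e_def pact_diff pact_commute pact_poly_minus pact_minus)
  also have "\<dots> = pact (x * r + y * s) u1"
    by (simp add: su2 pact_minus pact_poly_add pact_mult)
  finally have "u1 = pact (- s) e" by (simp add: xyrs)
  moreover have "pact r e = pact x (pact r u2) - pact y (pact r u1)"
    by (simp add: e_def pact_diff pact_commute)
  then have "pact r e = pact (x * r + y * s) u2"
    by (simp add: ru1 pact_minus pact_poly_add pact_mult pact_commute)
  then have "u2 = pact r e" by (simp add: xyrs)
  ultimately show ?thesis by (rule that[OF e_def])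
qed

lemma even_parts_generate_V0:
  obtains u1 u2 where "u1 \<in> V0" "u2 \<in> V0" "\<And>v. v \<in> V0 \<Longrightarrow> \<exists>p q. v = pact p u1 + pact q u2"
proof -
  obtain w1 w2 where span: "\<And>w. \<exists>p q. w = pact p w1 + pact q w2"
    by (rule free_basis) blast
  obtain u1 v1 u2 v2 where uv: "u1 \<in> V0" "v1 \<in> V1" "w1 = u1 + v1" "u2 \<in> V0" "v2 \<in> V1" "w2 = u2 + v2"
    using V0_plus_V1[of w1] V0_plus_V1[of w2] by blast
  show ?thesis
  proof (rule that[OF uv(1,4)])
    fix v assume v: "v \<in> V0"
    obtain p q where v_pq: "v = pact p w1 + pact q w2" using span[of v] by blast
    have "pact p u1 + pact q u2 - v \<in> V0"
      using uv v by (intro subspace_diff[OF subspace_V0] subspace_add[OF subspace_V0] pact_V0)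
    moreover have "pact p v1 + pact q v2 \<in> V1"
      using uv by (intro subspace_add[OF subspace_V1] pact_V1)
    moreover have "v = (pact p u1 + pact q u2) + (pact p v1 + pact q v2)"
      by (simp add: v_pq uv pact_add algebra_simps)
    then have "(pact p u1 + pact q u2 - v) + (pact p v1 + pact q v2) = 0"
      by (simp add: algebra_simps)
    ultimately have "pact p u1 + pact q u2 - v = 0" by (rule graded_sum_eq_0(1))
    then show "\<exists>p q. v = pact p u1 + pact q u2" by (metis eq_iff_diff_eq_0)
  qed
qed

lemma generates_V0_nonzero:
  assumes "generates V0 e"
  shows "e \<noteq> 0"
proof
  assume "e = 0"
  obtain v where "v \<in> V0" "v \<noteq> 0" using V0_nontrivial by blast
  moreover obtain f where "v = pact f e" using assms \<open>v \<in> V0\<close>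
    by (auto simp: generates_def)
  ultimately show False using \<open>e = 0\<close> by simp
qed

text \<open>\<open>V0\<close> is generated by the even parts \<open>u\<^sub>1, u\<^sub>2\<close> of a basis. By the rank, \<open>u\<^sub>1, u\<^sub>2, G\<^sub>0 u\<^sub>1\<close>
  satisfy a nontrivial relation; its odd part vanishes since \<open>G\<^sub>0\<close> is injective, so it is a relation
  between \<open>u\<^sub>1\<close> and \<open>u\<^sub>2\<close>, and \<open>common_generator\<close> applies.\<close>

lemma V0_cyclic: "\<exists>e\<in>V0. e \<noteq> 0 \<and> generates V0 e"
proof -
  obtain u1 u2 where u: "u1 \<in> V0" "u2 \<in> V0" and gen: "\<And>v. v \<in> V0 \<Longrightarrow> \<exists>p q. v = pact p u1 + pact q u2"
    using even_parts_generate_V0 by blast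
  obtain f1 f2 f3 where f: "f1 \<noteq> 0 \<or> f2 \<noteq> 0 \<or> f3 \<noteq> 0" "pact f1 u1 + pact f2 u2 + pact f3 (G 0 u1) = 0"
    using pact_relation3 by blast
  have "pact f1 u1 + pact f2 u2 \<in> V0" "pact f3 (G 0 u1) \<in> V1"
    using u by (auto intro: subspace_add[OF subspace_V0] pact_V0 pact_V1 G_V0)
  then have rel: "pact f1 u1 + pact f2 u2 = 0" and "G 0 (pact f3 u1) = 0"
    using graded_sum_eq_0 f(2) by (auto simp: G0_pact)
  from \<open>G 0 (pact f3 u1) = 0\<close> have f3u1: "pact f3 u1 = 0" by (rule G0_eq_0D)
  have "\<exists>e\<in>V0. generates V0 e"
  proof (cases "u1 = 0")
    case True
    have "generates V0 u2"
      unfolding generates_def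
    proof
      fix v assume "v \<in> V0"
      then obtain p q where "v = pact p u1 + pact q u2" using gen by blast
      then have "v = pact q u2" using True by simp
      then show "\<exists>f. v = pact f u2" by blast
    qed
    then show ?thesis using u(2) by blast
  next
    case False
    then have "f3 = 0" using torsion_free[OF f3u1] by blast
    then have "f1 \<noteq> 0 \<or> f2 \<noteq> 0" using f(1) by simp
    then obtain e x y r s where e: "e = pact x u2 - pact y u1" "u1 = pact r e" "u2 = pact s e"
      by (rule common_generator[OF rel])
    have "generates V0 e"
      unfolding generates_def
    proof
      fix v assume "v \<in> V0"
      then obtain p q where "v = pact p u1 + pact q u2" using gen by blast
      then have "v = pact (p * r + q * s) e" by (simp add: e(2,3) pact_poly_add pact_mult)
      then show "\<exists>f. v = pact f e" by blast
    qed
    moreover have "e \<in> V0" using u by (simp add: e(1) subspace_diff[OF subspace_V0] pact_V0)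
    ultimately show ?thesis by blast
  qed
  then show ?thesis using generates_V0_nonzero by blast
qed

lemma G0_links_generators:
  "(\<exists>e\<in>V0. e \<noteq> 0 \<and> generates V0 e \<and> generates V1 (G 0 e)) \<or>
   (\<exists>e\<in>V1. e \<noteq> 0 \<and> generates V1 e \<and> generates V0 (G 0 e))"
proof -
  interpret swapped: free_tmodule sc V1 V0 L I G
    by (rule free_tmodule.intro[OF tmodule.intro[OF tmod_swap[OF tmod]] free_tmodule_axioms.intro[OF free]])
  obtain e0 where e0: "e0 \<in> V0" "e0 \<noteq> 0" "generates V0 e0" using V0_cyclic by blast
  obtain e1 where e1: "e1 \<in> V1" "e1 \<noteq> 0" "generates V1 e1" using swapped.V0_cyclic
    by blast
  obtain g where g: "G 0 e0 = pact g e1" using e1(3) G_V0[OF e0(1)] by (auto simp: generates_def)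
  obtain h where h: "G 0 e1 = pact h e0" using e0(3) G_V1[OF e1(1)] by (auto simp: generates_def)
  \<comment> \<open>\<open>G\<^sub>0\<^sup>2 = L\<^sub>0\<close> forces \<open>g h = x\<close>, so one of \<open>g\<close>, \<open>h\<close> is a nonzero constant\<close>
  have "pact (g * h) e0 = pact [:0, 1:] e0"
    using G0_G0[of e0] by (simp add: g G0_pact h pact_mult pact_x)
  then have gh: "g * h = [:0, 1:]" using pact_cancel e0(2) by blast
  then have "g \<noteq> 0" "h \<noteq> 0" by auto
  moreover have "degree (g * h) = 1" using gh by simp
  ultimately have "degree g + degree h = 1" by (simp add: degree_mult_eq)
  then consider "degree g = 0" | "degree h = 0" by linarith
  then show ?thesis
  proof cases
    case 1
    then obtain c where "g = [:c:]" by (metis degree_eq_zeroE)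
    with \<open>g \<noteq> 0\<close> have "G 0 e0 = sc c e1" "c \<noteq> 0" using g by auto
    then have "generates V1 (G 0 e0)" using generates_scale[OF e1(3)] by simp
    then show ?thesis using e0 by blast
  next
    case 2
    then obtain c where "h = [:c:]" by (metis degree_eq_zeroE)
    with \<open>h \<noteq> 0\<close> have "G 0 e1 = sc c e0" "c \<noteq> 0" using h by auto
    then have "generates V0 (G 0 e1)" using generates_scale[OF e0(3)] by simp
    then show ?thesis using e1 by blast
  qed
qed

end

section \<open>Solving the structure equations\<close>

lemma poly_pshift[simp]: "poly (pshift f c) z = poly f (z + c)"
  by (simp add: pshift_def poly_pcompose add.commute)

lemma degree_pshift[simp]: "degree (pshift f c) = degree f"
  by (simp add: pshift_def degree_pcompose)

lemma pshift_eq_0_iff[simp]: "pshift f c = 0 \<longleftrightarrow> (f :: complex poly) = 0"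
  unfolding pshift_def by (rule pcompose_eq_0_iff) simp

lemma mult_smult_right_commute: "p * smult c q = smult c (q * p)"
  for p q :: "'a::comm_ring poly"
  by (simp add: mult.commute)

lemma mult_const_right: "p * [:c:] = smult c p"
  for p :: "'a::comm_ring poly"
  by (simp add: mult.commute)

lemma poly_eqI_linear: "(\<And>z. poly p z = c0 + c1 * z) \<Longrightarrow> (p :: complex poly) = [:c0, c1:]"
  by (rule poly_ext) (simp add: algebra_simps)

lemma poly_eqI_const: "(\<And>z. poly p z = c0) \<Longrightarrow> (p :: complex poly) = [:c0:]"
  by (rule poly_ext) simp

lemma periodic_poly_const:
  fixes q :: "'a::field_char_0 poly"
  assumes d: "d \<noteq> 0" and per: "\<And>z. poly q (z + d) = poly q z"
  shows "q = [:poly q 0:]"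
proof (rule ccontr)
  define r where "r = q - [:poly q 0:]"
  assume "q \<noteq> [:poly q 0:]"
  then have r0: "r \<noteq> 0" by (simp add: r_def)
  have per': "\<And>z. poly q (d + z) = poly q z" using per by (simp add: add.commute)
  have "poly q (of_nat n * d) = poly q 0" for n
    by (induction n) (simp_all add: distrib_right per')
  then have "range (\<lambda>n. of_nat n * d) \<subseteq> {x. poly r x = 0}" by (auto simp: r_def)
  moreover have "infinite (range (\<lambda>n::nat. of_nat n * d))"
    by (rule range_inj_infinite) (simp add: inj_on_def d)
  ultimately show False using poly_roots_finite[OF r0] finite_subset by blast
qed

lemma powi_of_recurrence:
  fixes f :: "int \<Rightarrow> 'a::field"
  assumes f0: "f 0 = 1" and st: "\<And>n. f (n+1) = c * f n" and c: "c \<noteq> 0"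
  shows "f n = c powi n"
proof (induction n rule: int_induct[where k=0])
  case base then show ?case by (simp add: f0)
next
  case (step1 i) then show ?case by (simp add: st power_int_add_1' c)
next
  case (step2 i)
  have "f i = c * f (i - 1)" using st[of "i - 1"] by simp
  then have "f (i - 1) = f i / c" using c by (simp add: field_simps)
  then show ?case using step2 c by (simp add: power_int_diff)
qed

lemma degree_le_1_eq: "degree p \<le> 1 \<Longrightarrow> p = [:coeff p 0, coeff p 1:]"
  by (rule poly_eqI) (auto simp: coeff_pCons coeff_eq_0 split: nat.split)

lemma minus_one_powi_nonzero: "((-1::complex) powi k) \<noteq> 0"
  by (simp add: power_int_minus_left)

lemma minus_one_powi_odd: "odd k \<Longrightarrow> ((-1::complex) powi k) = -1"
  by (simp add: power_int_minus_left)

lemma of_int_odd_nonzero: "odd k \<Longrightarrow> (of_int k :: complex) \<noteq> 0" by auto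

lemma one_minus_2n_nonzero: "(1 - 2 * of_int n :: complex) \<noteq> 0"
proof
  assume "(1 - 2 * of_int n :: complex) = 0"
  then have "(of_int (1 - 2 * n) :: complex) = of_int 0" by simp
  then have "1 - 2 * n = 0" by (simp only: of_int_eq_iff)
  then show False by presburger
qed

text \<open>The structure polynomials of a module with an even generator \<open>e\<^sub>0\<close> and an odd generator
  \<open>e\<^sub>1\<close> over \<open>\<complex>[x]\<close>, \<open>x = L\<^sub>0\<close>: \<open>L\<^sub>m e\<^sub>0 = a\<^sub>m e\<^sub>0\<close>, \<open>L\<^sub>m e\<^sub>1 = b\<^sub>m e\<^sub>1\<close>,
  \<open>G\<^sub>k e\<^sub>0 = g\<^sub>k e\<^sub>1\<close>, \<open>G\<^sub>k e\<^sub>1 = h\<^sub>k e\<^sub>0\<close>, \<open>I\<^sub>k e\<^sub>0 = i\<^sub>k e\<^sub>0\<close>, \<open>I\<^sub>k e\<^sub>1 = j\<^sub>k e\<^sub>1\<close>, with \<open>G\<close> and \<open>I\<close> indexed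
  by twice their degree as in the definition of \<open>tmod\<close>, and with \<open>G\<^sub>0 e\<^sub>0 = e\<^sub>1\<close>.
  The assumptions are the defining relations evaluated on \<open>e\<^sub>0\<close> and \<open>e\<^sub>1\<close>.\<close>

locale structure_polys =
  fixes a b g h i j :: "int \<Rightarrow> complex poly"
  assumes g_0: "g 0 = 1" and h_0: "h 0 = [:0, 1:]"
    and a_GG: "\<And>k. a k = smult ((-1) powi k) (pshift (g k) (of_int k / 2) * h k)"
    and b_GG: "\<And>k. b k = smult ((-1) powi k) (pshift (h k) (of_int k / 2) * g k)"
    and gh_anticomm: "\<And>k. pshift (g (-k)) (of_int k / 2) * h k + pshift (g k) (of_int (-k) / 2) * h (-k)
      = smult ((-1) powi k * 2) [:0, 1:]"
    and hg_anticomm: "\<And>k. pshift (h (-k)) (of_int k / 2) * g k + pshift (h k) (of_int (-k) / 2) * g (-k)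
      = smult ((-1) powi k * 2) [:0, 1:]"
    and b_minus_a: "\<And>m. b m - a m = smult (of_int m / 2) (g (2 * m))"
    and x_a_minus_b_x: "\<And>m. pshift [:0, 1:] (of_int m) * a m - b m * [:0, 1:]
      = smult (of_int m / 2) (h (2 * m))"
    and g_comm_L: "\<And>m k. pshift (g k) (of_int m) * b m - pshift (a m) (of_int k / 2) * g k
      = smult (of_int (m - k) / 2) (g (2 * m + k))"
    and h_comm_L: "\<And>m k. pshift (h k) (of_int m) * a m - pshift (b m) (of_int k / 2) * h k
      = smult (of_int (m - k) / 2) (h (2 * m + k))"
    and i_GG: "\<And>k. odd k \<Longrightarrow> g k * [:0, 1:] + h k = smult (of_int k / 2) (i k)"
    and j_GG: "\<And>k. odd k \<Longrightarrow> h k + pshift [:0, 1:] (of_int k / 2) * g k = smult (of_int k / 2) (j k)"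
    and i_commute: "pshift (i (-1)) (1 / 2) * i 1 = pshift (i 1) (-1 / 2) * i (-1)"
begin

lemma poly_gh_anticomm:
  "poly (g (-k)) (z + of_int k/2) * poly (h k) z + poly (g k) (z - of_int k/2) * poly (h (-k)) z
    = (-1) powi k * 2 * z"
  using arg_cong[OF gh_anticomm[of k], of "\<lambda>p. poly p z"] by (simp add: algebra_simps)

lemma poly_hg_anticomm:
  "poly (h (-k)) (z + of_int k/2) * poly (g k) z + poly (h k) (z - of_int k/2) * poly (g (-k)) z
    = (-1) powi k * 2 * z"
  using arg_cong[OF hg_anticomm[of k], of "\<lambda>p. poly p z"] by (simp add: algebra_simps)

text \<open>By the two anticommutator identities, \<open>U(w) = g\<^sub>-\<^sub>k(w + k/2) h\<^sub>k(w)\<close> satisfies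
  \<open>U(w + k) - U(w) = (-1)\<^sup>k k\<close>; hence \<open>U - (-1)\<^sup>k x\<close> is \<open>k\<close>-periodic, i.e. constant.\<close>

lemma g_h_shift_product:
  assumes k: "k \<noteq> 0"
  shows "\<exists>c. pshift (g (-k)) (of_int k/2) * h k = [:c, (-1) powi k:]"
proof -
  define Q where "Q = pshift (g (-k)) (of_int k/2) * h k - [:0, (-1) powi k:]"
  define U where "U w = poly (g (-k)) (w + of_int k/2) * poly (h k) w" for w
  define V where "V w = poly (g k) (w - of_int k/2) * poly (h (-k)) w" for w
  have per: "poly Q (w + of_int k) = poly Q w" for w
  proof -
    have 1: "U (w + of_int k) + V (w + of_int k) = (-1) powi k * 2 * (w + of_int k)"
      unfolding U_def V_def by (rule poly_gh_anticomm)
    have 2: "V (w + of_int k) + U w = (-1) powi k * 2 * (w + of_int k / 2)"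
      using poly_hg_anticomm[of k "w + of_int k/2"] unfolding U_def V_def
      by (simp add: algebra_simps)
    have "U (w + of_int k) - U w = (U (w + of_int k) + V (w + of_int k)) - (V (w + of_int k) + U w)"
      by (simp add: algebra_simps)
    also have "\<dots> = (-1) powi k * 2 * (w + of_int k) - (-1) powi k * 2 * (w + of_int k / 2)"
      by (simp only: 1 2)
    also have "\<dots> = (-1) powi k * of_int k" by (simp add: algebra_simps)
    finally have "U (w + of_int k) - U w = (-1) powi k * of_int k" .
    then show ?thesis unfolding Q_def U_def by (simp add: algebra_simps)
  qed
  have "Q = [:poly Q 0:]" by (rule periodic_poly_const[OF _ per]) (use k in simp)
  then have "pshift (g (-k)) (of_int k/2) * h k = [:poly Q 0:] + [:0, (-1) powi k:]"
    unfolding Q_def by (metis diff_add_cancel)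
  then show ?thesis by simp
qed

lemma g_h_shift_product_degree:
  assumes k: "k \<noteq> 0"
  shows "g (-k) \<noteq> 0" "h k \<noteq> 0" "degree (g (-k)) + degree (h k) = 1"
proof -
  obtain c where c: "pshift (g (-k)) (of_int k/2) * h k = [:c, (-1) powi k:]"
    using g_h_shift_product[OF k] by blast
  have nz: "pshift (g (-k)) (of_int k/2) * h k \<noteq> 0" using c minus_one_powi_nonzero[of k]
    by auto
  then show "g (-k) \<noteq> 0" "h k \<noteq> 0" by auto
  have "degree (pshift (g (-k)) (of_int k/2) * h k) = 1" using c minus_one_powi_nonzero[of k]
    by simp
  then show "degree (g (-k)) + degree (h k) = 1"
    using \<open>g (-k) \<noteq> 0\<close> \<open>h k \<noteq> 0\<close>
    by (simp add: degree_mult_eq)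
qed

lemma g_nonzero: "g k \<noteq> 0"
proof (cases "k = 0")
  case True then show ?thesis by (simp add: g_0)
next
  case False
  then have "-k \<noteq> 0" by simp
  from g_h_shift_product_degree(1)[OF this] show ?thesis by simp
qed

lemma h_nonzero: "h k \<noteq> 0"
proof (cases "k = 0")
  case True then show ?thesis by (simp add: h_0)
next
  case False
  from g_h_shift_product_degree(2)[OF this] show ?thesis .
qed

lemma degree_a: "degree (a k) = degree (g k) + degree (h k)"
  using g_nonzero[of k] h_nonzero[of k] minus_one_powi_nonzero[of k]
  by (simp add: a_GG[of k] degree_mult_eq)

lemma degree_a_neg: "m \<noteq> 0 \<Longrightarrow> degree (a m) + degree (a (-m)) = 2"
  using g_h_shift_product_degree(3)[of m] g_h_shift_product_degree(3)[of "-m"] degree_a[of m] degree_a[of "-m"]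
  by simp

lemma a_eq_h_g:
  shows "smult 2 (a m) = h (2*m) + g (2*m) * [:0,1:]"
proof (cases "m = 0")
  case True
  then show ?thesis by (simp add: a_GG[of 0] g_0 h_0 pshift_def pcompose_1)
next
  case False
  show ?thesis
  proof (rule poly_ext)
    fix z
    have 1: "poly (b m) z - poly (a m) z = of_int m / 2 * poly (g (2*m)) z"
      using arg_cong[OF b_minus_a[of m], of "\<lambda>p. poly p z"] by simp
    have 2: "(z + of_int m) * poly (a m) z - poly (b m) z * z = of_int m / 2 * poly (h (2*m)) z"
      using arg_cong[OF x_a_minus_b_x[of m], of "\<lambda>p. poly p z"] by (simp add: algebra_simps)
    have "poly (b m) z = poly (a m) z + of_int m / 2 * poly (g (2*m)) z"
      by (metis 1 add.commute diff_add_cancel)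
    then have "of_int m / 2 * (2 * poly (a m) z - poly (h (2*m)) z - poly (g (2*m)) z * z) = 0"
      using 2 by (simp add: algebra_simps)
    then have "2 * poly (a m) z - poly (h (2*m)) z - poly (g (2*m)) z * z = 0" using False by simp
    then show "poly (smult 2 (a m)) z = poly (h (2*m) + g (2*m) * [:0,1:]) z"
      by (simp add: algebra_simps)
  qed
qed

lemma degree_g_even: "degree (g (2*m)) = 0"
proof (rule ccontr)
  \<comment> \<open>otherwise \<open>a\<^sub>m\<close> has degree 2, leaving degree 0 for \<open>a\<^sub>-\<^sub>m\<close>, which \<open>a_eq_h_g\<close> excludes\<close>
  assume A: "degree (g (2*m)) \<noteq> 0"
  then have m: "m \<noteq> 0" using g_0 by auto
  have "degree (g (- (- (2*m)))) + degree (h (-(2*m))) = 1"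
    by (rule g_h_shift_product_degree(3)) (use m in simp)
  then have d1: "degree (g (2*m)) = 1" "degree (h (-(2*m))) = 0" using A by auto
  have "degree (g (-(2*m))) + degree (h (2*m)) = 1"
    by (rule g_h_shift_product_degree(3)) (use m in simp)
  then have d2: "degree (h (2*m)) \<le> 1" by simp
  have d3: "degree (g (2*m) * [:0,1:]) = 2" using d1 g_nonzero[of "2*m"]
    by (simp add: degree_mult_eq)
  have "degree (smult 2 (a m)) = 2" unfolding a_eq_h_g using d2 d3
    by (subst degree_add_eq_right) auto
  then have "degree (a m) = 2" by simp
  then have "degree (a (-m)) = 0" using degree_a_neg[OF m] by simp
  moreover have "degree (smult 2 (a (-m))) \<noteq> 0"
  proof -
    have "degree (g (-(2*m)) * [:0,1:]) = degree (g (-(2*m))) + 1" using g_nonzero[of "-(2*m)"]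
      by (simp add: degree_mult_eq)
    then have "degree (h (-(2*m)) + g (-(2*m)) * [:0,1:]) = degree (g (-(2*m))) + 1"
      using d1 by (subst degree_add_eq_right) auto
    then show ?thesis using a_eq_h_g[of "-m"] by simp
  qed
  ultimately show False by simp
qed

definition gam where "gam m = coeff (g (2*m)) 0"
definition eta where "eta m = coeff (h (2*m)) 0"
definition del where "del m = coeff (h (2*m)) 1"

lemma g_even: "g (2*m) = [:gam m:]"
  unfolding gam_def using degree_0_id[OF degree_g_even] by simp

lemma gam_0: "gam 0 = 1" by (simp add: gam_def g_0)
lemma gam_nonzero: "gam m \<noteq> 0" using g_nonzero[of "2*m"] g_even[of m] by auto

lemma degree_h_even: "degree (h (2*m)) = 1"
proof (cases "m = 0")
  case True then show ?thesis by (simp add: h_0)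
next
  case False
  have "degree (g (-(2*m))) + degree (h (2*m)) = 1"
    by (rule g_h_shift_product_degree(3)) (use False in simp)
  moreover have "degree (g (-(2*m))) = 0" using degree_g_even[of "-m"] by simp
  ultimately show ?thesis by simp
qed

lemma h_even: "h (2*m) = [:eta m, del m:]"
proof -
  have "degree (h (2*m)) \<le> 1" using degree_h_even[of m] by simp
  from degree_le_1_eq[OF this] show ?thesis unfolding eta_def del_def .
qed

lemma poly_h_even: "poly (h (2*m)) z = eta m + del m * z"
  by (subst h_even) (simp add: mult.commute)

lemma poly_g_even: "poly (g (2*m)) z = gam m" by (simp add: g_even)

lemma poly_a: "poly (a m) z = (eta m + del m * z + gam m * z) / 2"
proof -
  have "2 * poly (a m) z = poly (h (2*m)) z + poly (g (2*m)) z * z"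
    using arg_cong[OF a_eq_h_g[of m], of "\<lambda>p. poly p z"] by simp
  then have "2 * poly (a m) z = eta m + del m * z + gam m * z"
    by (simp only: poly_h_even poly_g_even)
  then show ?thesis by (simp add: field_simps)
qed

lemma poly_b: "poly (b m) z = poly (a m) z + of_int m / 2 * gam m"
proof -
  have "poly (b m) z - poly (a m) z = of_int m / 2 * poly (g (2*m)) z"
    using arg_cong[OF b_minus_a[of m], of "\<lambda>p. poly p z"] by simp
  then have "poly (b m) z - poly (a m) z = of_int m / 2 * gam m" by (simp only: poly_g_even)
  then show ?thesis by (metis add.commute diff_add_cancel)
qed

lemma gam_neg_del: "gam (-m) * del m = 1"
proof (cases "m = 0")
  case True then show ?thesis by (simp add: gam_0 del_def h_0)
next
  case False
  obtain c where c: "pshift (g (-(2*m))) (of_int (2*m)/2) * h (2*m) = [:c, (-1) powi (2*m):]"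
    using g_h_shift_product[of "2*m"] False by auto
  have gm: "g (-(2*m)) = [:gam (-m):]" using g_even[of "-m"] by simp
  have p1: "poly (pshift (g (-(2*m))) (of_int (2*m)/2) * h (2*m)) z = gam (-m) * (eta m + del m * z)" for z
    by (simp only: gm poly_mult poly_pshift poly_h_even) simp
  have p2: "poly (pshift (g (-(2*m))) (of_int (2*m)/2) * h (2*m)) z = c + z" for z
    unfolding c by (simp add: power_int_minus_left)
  have "gam (-m) * (eta m + del m * z) = c + z" for z
    using p1[of z] p2[of z] by simp
  from this[of 1] this[of 0] show ?thesis by (simp add: algebra_simps)
qed

lemma gam_recurrence: "gam n * (gam 1 / 2 - of_int n * (del 1 + gam 1) / 2) = (1 - 2 * of_int n) / 2 * gam (n + 1)"
proof -
  have e: "poly (pshift (g (2*n)) (of_int 1) * b 1 - pshift (a 1) (of_int (2*n)/2) * g (2*n)) 0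
      = poly (smult (of_int (1 - 2*n)/2) (g (2*1 + 2*n))) 0"
    using g_comm_L[where m=1 and k="2*n"] by simp
  have i: "2*1 + 2*n = 2*(n+1)" by simp
  have "gam n * poly (b 1) 0 - poly (a 1) (of_int n) * gam n = of_int (1 - 2*n)/2 * gam (n+1)"
    using e unfolding i by (simp only: poly_diff poly_mult poly_pshift poly_g_even poly_smult) simp
  then show ?thesis by (simp only: poly_b poly_a) (simp add: field_simps)
qed

lemma del_1: "del 1 = gam 1"
proof -
  have "gam (-1) * (gam 1 / 2 - of_int (-1) * (del 1 + gam 1) / 2) = (1 - 2 * of_int (-1)) / 2 * gam (-1 + 1)"
    by (rule gam_recurrence)
  moreover have "gam (-1) * del 1 = 1" using gam_neg_del[of 1] by simp
  ultimately have "gam (-1) * gam 1 = 1" by (simp add: gam_0 algebra_simps add_divide_distrib)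
  then show ?thesis
    using \<open>gam (-1) * del 1 = 1\<close> gam_nonzero[of "-1"] by (metis mult_left_cancel)
qed

definition lam where "lam = gam 1"
lemma lam_nonzero: "lam \<noteq> 0" using gam_nonzero by (simp add: lam_def)

lemma gam_eq_powi: "gam n = lam powi n"
proof (rule powi_of_recurrence[where f=gam, OF gam_0 _ lam_nonzero])
  fix n
  have "gam n * (gam 1 / 2 - of_int n * (gam 1 + gam 1) / 2) = (1 - 2 * of_int n) / 2 * gam (n + 1)"
    using gam_recurrence[of n] del_1 by simp
  then have "(1 - 2 * of_int n) * (gam (n+1) - gam 1 * gam n) = 0"
    by (simp add: algebra_simps)
  moreover note one_minus_2n_nonzero[of n]
  ultimately show "gam (n + 1) = lam * gam n" by (simp add: lam_def)
qed

lemma del_eq_powi: "del m = lam powi m"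
  using gam_neg_del[of m] gam_eq_powi[of "-m"] lam_nonzero
  by (simp add: power_int_minus field_simps)

lemma eta_0: "eta 0 = 0" by (simp add: eta_def h_0)

lemma eta_recurrence: "lam powi n * eta 1 - lam * (2 * of_int n + 1) * eta n = (1 - 2 * of_int n) * eta (n + 1)"
proof -
  have e: "poly (pshift (h (2*n)) (of_int 1) * a 1 - pshift (b 1) (of_int (2*n)/2) * h (2*n)) 0
      = poly (smult (of_int (1 - 2*n)/2) (h (2*1 + 2*n))) 0"
    using h_comm_L[where m=1 and k="2*n"] by simp
  have i: "2*1 + 2*n = 2*(n+1)" by simp
  have "poly (h (2*n)) 1 * poly (a 1) 0 - poly (b 1) (of_int n) * poly (h (2*n)) 0 = of_int (1 - 2*n)/2 * poly (h (2*(n+1))) 0"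
    using e unfolding i by (simp only: poly_diff poly_mult poly_pshift poly_smult) simp
  then have "(eta n + del n) * ((eta 1 + del 1 * 0 + gam 1 * 0) / 2)
      - ((eta 1 + del 1 * of_int n + gam 1 * of_int n) / 2 + of_int 1 / 2 * gam 1) * eta n
      = of_int (1 - 2*n)/2 * eta (n+1)"
    by (simp only: poly_h_even poly_a poly_b) simp
  then have "(eta n + lam powi n) * (eta 1 / 2)
      - ((eta 1 + lam * of_int n + lam * of_int n) / 2 + lam / 2) * eta n
      = of_int (1 - 2*n)/2 * eta (n+1)"
    by (simp add: del_eq_powi del_1 lam_def)
  then have "2 * (lam powi n * eta 1 - lam * (2 * of_int n + 1) * eta n) = 2 * ((1 - 2 * of_int n) * eta (n + 1))"
    by (simp add: field_simps)
  then show ?thesis by (simp only: mult_cancel_left) simp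
qed

lemma eta_lam: "eta n * lam = of_int n * eta 1 * lam powi n"
proof (induction n rule: int_induct[where k=0])
  case base then show ?case by (simp add: eta_0)
next
  case (step1 n)
  have r: "lam powi n * eta 1 - lam * (2 * of_int n + 1) * eta n = (1 - 2 * of_int n) * eta (n + 1)"
    by (rule eta_recurrence)
  have p: "lam powi (n + 1) = lam powi n * lam" using lam_nonzero by (simp add: power_int_add_1)
  have "(1 - 2 * of_int n) * (eta (n + 1) * lam - (of_int n + 1) * eta 1 * lam powi (n + 1)) = 0"
    using r p step1.IH by algebra
  then show ?case using one_minus_2n_nonzero[of n] by simp
next
  case (step2 n)
  have r0: "lam powi (n - 1) * eta 1 - lam * (2 * of_int (n - 1) + 1) * eta (n - 1) = (1 - 2 * of_int (n - 1)) * eta (n - 1 + 1)"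
    by (rule eta_recurrence)
  have r: "lam powi (n - 1) * eta 1 - lam * (2 * (of_int n - 1) + 1) * eta (n - 1) = (1 - 2 * (of_int n - 1)) * eta n"
    using r0 by simp
  have p: "lam powi n = lam powi (n - 1) * lam" using lam_nonzero
    by (simp add: power_int_minus_mult)
  have "(1 - 2 * of_int n) * lam * (eta (n - 1) * lam - (of_int n - 1) * eta 1 * lam powi (n - 1)) = 0"
    using r p step2.IH by algebra
  then show ?case using one_minus_2n_nonzero[of n] lam_nonzero by simp
qed

definition al where "al = eta 1 / (2 * lam)"

lemma eta_eq: "eta n = 2 * of_int n * al * lam powi n"
proof -
  have "eta n = (eta n * lam) / lam" using lam_nonzero by simp
  also have "\<dots> = of_int n * eta 1 * lam powi n / lam" by (simp only: eta_lam)
  also have "\<dots> = 2 * of_int n * al * lam powi n" using lam_nonzero by (simp add: al_def)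
  finally show ?thesis .
qed

lemma poly_h_even_eq: "poly (h (2*m)) z = lam powi m * (z + 2 * of_int m * al)"
proof -
  have "poly (h (2*m)) z = 2 * of_int m * al * lam powi m + lam powi m * z"
    by (simp only: poly_h_even eta_eq del_eq_powi)
  then show ?thesis by (simp add: algebra_simps)
qed

lemma poly_a_eq: "poly (a m) z = lam powi m * (z + of_int m * al)"
proof -
  have "poly (a m) z = (2 * of_int m * al * lam powi m + lam powi m * z + lam powi m * z) / 2"
    by (simp only: poly_a eta_eq del_eq_powi gam_eq_powi)
  then show ?thesis by (simp add: algebra_simps add_divide_distrib)
qed

lemma poly_b_eq: "poly (b m) z = lam powi m * (z + of_int m * (al + 1/2))"
proof -
  have "poly (b m) z = lam powi m * (z + of_int m * al) + of_int m / 2 * lam powi m"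
    by (simp only: poly_b poly_a_eq gam_eq_powi)
  then show ?thesis by (simp add: algebra_simps)
qed

lemma lam_powi_nonzero: "lam powi m \<noteq> 0" using lam_nonzero by (simp add: power_int_not_zero)

lemma a_eq_linear: "a m = [:lam powi m * of_int m * al, lam powi m:]"
  by (rule poly_eqI_linear) (simp add: poly_a_eq algebra_simps)

lemma degree_a_eq_1: "degree (a m) = 1" using lam_powi_nonzero[of m] by (simp add: a_eq_linear)

lemma degree_g_h_eq_1: "degree (g k) + degree (h k) = 1" using degree_a[of k] degree_a_eq_1[of k]
  by simp

lemma degree_g_odd: assumes k: "odd k" shows "degree (g k) = 0"
proof (rule ccontr)
  assume A: "degree (g k) \<noteq> 0"
  then have "degree (h k) = 0" using degree_g_h_eq_1[of k] by simp
  then have hk0: "h k = [:coeff (h k) 0:]" using degree_0_id by metis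
  define e where "e = coeff (h k) 0"
  have hk: "h k = [:e:]" using hk0 unfolding e_def .
  have "a k = smult (-1) (pshift (g k) (of_int k/2) * [:e:])"
    by (simp only: a_GG[of k] minus_one_powi_odd[OF k] hk)
  then have 1: "poly (a k) 0 = - (poly (g k) (of_int k / 2) * e)" by simp
  have "b k = smult (-1) (pshift [:e:] (of_int k/2) * g k)"
    by (simp only: b_GG[of k] minus_one_powi_odd[OF k] hk)
  then have 2: "poly (b k) (of_int k / 2) = - (e * poly (g k) (of_int k / 2))"
    by (simp add: pshift_def)
  have "poly (a k) 0 = poly (b k) (of_int k / 2)" using 1 2 by (simp add: mult.commute)
  then have "lam powi k * (of_int k * al) = lam powi k * (of_int k / 2 + of_int k * (al + 1/2))"
    by (simp only: poly_a_eq poly_b_eq) simp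
  then have "lam powi k * of_int k = 0" by (simp add: algebra_simps)
  then show False using lam_powi_nonzero[of k] of_int_odd_nonzero[OF k] by simp
qed

definition g_odd where "g_odd k = coeff (g k) 0"

lemma g_odd_const: "odd k \<Longrightarrow> g k = [:g_odd k:]"
  unfolding g_odd_def using degree_0_id[OF degree_g_odd] by metis

lemma g_odd_nonzero: "odd k \<Longrightarrow> g_odd k \<noteq> 0"
  using g_nonzero[of k] g_odd_const[of k] by auto

lemma poly_h_odd: assumes k: "odd k" shows "poly (h k) z = - poly (a k) z / g_odd k"
proof -
  have "poly (a k) z = - (g_odd k * poly (h k) z)"
    using arg_cong[OF a_GG[of k], of "\<lambda>p. poly p z"] minus_one_powi_odd[OF k] g_odd_const[OF k]
    by simp
  then show ?thesis using g_odd_nonzero[OF k] by (simp add: field_simps)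
qed

lemma g_odd_step_up: assumes k: "odd k" and k1: "k \<noteq> 1" shows "g_odd (k+2) = lam * g_odd k"
proof -
  have e: "poly (pshift (g k) (of_int 1) * b 1 - pshift (a 1) (of_int k/2) * g k) 0
      = poly (smult (of_int (1 - k)/2) (g (2*1 + k))) 0"
    using g_comm_L[where m=1 and k=k] by simp
  have i: "2*1 + k = k + 2" by simp
  have k2: "odd (k + 2)" using k by simp
  have "g_odd k * poly (b 1) 0 - poly (a 1) (of_int k / 2) * g_odd k = of_int (1 - k)/2 * g_odd (k+2)"
    using e unfolding i
    by (simp only: poly_diff poly_mult poly_pshift poly_smult g_odd_const[OF k] g_odd_const[OF k2]) simp
  then have "g_odd k * (lam * (of_int 1 * (al + 1/2))) - lam * (of_int k / 2 + of_int 1 * al) * g_odd k = of_int (1 - k)/2 * g_odd (k+2)"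
    by (simp only: poly_a_eq poly_b_eq) (simp add: lam_def gam_eq_powi[of 1, symmetric])
  then have "(1 - of_int k) * (g_odd (k+2) - lam * g_odd k) = 0" by (simp add: algebra_simps)
  moreover have "(1 - of_int k :: complex) \<noteq> 0" using k1
    by (metis eq_iff_diff_eq_0 of_int_1 of_int_eq_iff)
  ultimately show ?thesis by simp
qed

lemma g_odd_step_down: assumes k: "odd k" and k1: "k \<noteq> -1" shows "g_odd k = lam * g_odd (k - 2)"
proof -
  have e: "poly (pshift (g k) (of_int (-1)) * b (-1) - pshift (a (-1)) (of_int k/2) * g k) 0
      = poly (smult (of_int (-1 - k)/2) (g (2*(-1) + k))) 0"
    using g_comm_L[where m="-1" and k=k] by simp
  have i: "2*(-1) + k = k - 2" by simp
  have k2: "odd (k - 2)" using k by simp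
  have "g_odd k * poly (b (-1)) 0 - poly (a (-1)) (of_int k / 2) * g_odd k = of_int (-1 - k)/2 * g_odd (k-2)"
    using e unfolding i
    by (simp only: poly_diff poly_mult poly_pshift poly_smult g_odd_const[OF k] g_odd_const[OF k2]) simp
  then have "g_odd k * (lam powi (-1) * (0 + of_int (-1) * (al + 1/2))) - lam powi (-1) * (of_int k / 2 + of_int (-1) * al) * g_odd k = of_int (-1 - k)/2 * g_odd (k-2)"
    by (simp only: poly_a_eq poly_b_eq)
  then have "(1 + of_int k) * (g_odd k * inverse lam - g_odd (k - 2)) = 0"
    by (simp add: power_int_minus algebra_simps)
  moreover have "(1 + of_int k :: complex) \<noteq> 0" using k1
    by (metis add.inverse_unique add_eq_0_iff of_int_1 of_int_eq_iff of_int_minus)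
  ultimately have "g_odd k * inverse lam = g_odd (k - 2)" by simp
  then show ?thesis using lam_nonzero by (simp add: field_simps)
qed

lemma g_odd_step: assumes k: "odd k" shows "g_odd (k+2) = lam * g_odd k"
proof (cases "k = 1")
  case False then show ?thesis using g_odd_step_up[OF k] by simp
next
  case True
  have "g_odd 3 = lam * g_odd (3 - 2)" by (rule g_odd_step_down) auto
  then show ?thesis using True by simp
qed

definition \<sigma> where "\<sigma> = g_odd 1"

lemma sigma_nonzero: "\<sigma> \<noteq> 0" unfolding \<sigma>_def by (rule g_odd_nonzero) simp

lemma g_odd_eq_powi: "g_odd (2*n+1) = lam powi n * \<sigma>"
proof -
  have "g_odd (2*n+1) / \<sigma> = lam powi n"
  proof (rule powi_of_recurrence[where f="\<lambda>n. g_odd (2*n+1) / \<sigma>", OF _ _ lam_nonzero])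
    show "g_odd (2*0+1) / \<sigma> = 1" using sigma_nonzero by (simp add: \<sigma>_def)
    fix n
    have "g_odd (2*(n+1)+1) = g_odd ((2*n+1) + 2)" by (simp add: algebra_simps)
    also have "\<dots> = lam * g_odd (2*n+1)" by (rule g_odd_step) simp
    finally show "g_odd (2*(n+1)+1) / \<sigma> = lam * (g_odd (2*n+1) / \<sigma>)" by simp
  qed
  then show ?thesis using sigma_nonzero by (simp add: field_simps)
qed

lemma poly_i_odd: assumes k: "odd k" shows "poly (i k) z = 2 / of_int k * (g_odd k * z - poly (a k) z / g_odd k)"
proof -
  have "g_odd k * z + poly (h k) z = poly (g k * [:0,1:] + h k) z" by (simp add: g_odd_const[OF k])
  also have "\<dots> = of_int k / 2 * poly (i k) z" by (simp only: i_GG[OF k] poly_smult)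
  finally have "g_odd k * z + poly (h k) z = of_int k / 2 * poly (i k) z" .
  then have "g_odd k * z - poly (a k) z / g_odd k = of_int k / 2 * poly (i k) z"
    by (simp add: poly_h_odd[OF k])
  then show ?thesis using of_int_odd_nonzero[OF k] by (simp add: field_simps)
qed

lemma poly_j_odd: assumes k: "odd k" shows "poly (j k) z = 2 / of_int k * (- poly (a k) z / g_odd k + (z + of_int k / 2) * g_odd k)"
proof -
  have "poly (h k) z + (z + of_int k / 2) * g_odd k = poly (h k + pshift [:0,1:] (of_int k/2) * g k) z"
    by (simp add: g_odd_const[OF k])
  also have "\<dots> = of_int k / 2 * poly (j k) z" by (simp only: j_GG[OF k] poly_smult)
  finally have "poly (h k) z + (z + of_int k / 2) * g_odd k = of_int k / 2 * poly (j k) z" .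
  then have H: "- poly (a k) z / g_odd k + (z + of_int k / 2) * g_odd k = of_int k / 2 * poly (j k) z"
    by (simp add: poly_h_odd[OF k])
  show ?thesis unfolding H using of_int_odd_nonzero[OF k] by simp
qed

lemma g_odd_neg1: "g_odd (-1) = \<sigma> / lam"
  using g_odd_eq_powi[of "-1"] lam_nonzero by (simp add: power_int_minus field_simps)

text \<open>\<open>i\<^sub>1\<close> and \<open>i\<^sub>-\<^sub>1\<close> are at most linear, and \<open>[I\<^sub>1\<^sub>/\<^sub>2, I\<^sub>-\<^sub>1\<^sub>/\<^sub>2] = 0\<close> forces one of their
  leading coefficients to vanish; either one vanishes iff \<open>\<sigma>\<^sup>2 = \<lambda>\<close>.\<close>

lemma sigma_squared: "\<sigma> * \<sigma> = lam"
proof -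
  define A where "A = 2 * \<sigma> - 2 * lam / \<sigma>"
  define B where "B = - 2 * lam * al / \<sigma>"
  define A' where "A' = 2 / \<sigma> - 2 * \<sigma> / lam"
  define B' where "B' = - 2 * al / \<sigma>"
  have I1: "poly (i 1) z = A * z + B" for z
  proof -
    have "poly (i 1) z = 2 / of_int 1 * (g_odd 1 * z - poly (a 1) z / g_odd 1)"
      by (rule poly_i_odd) simp
    also have "\<dots> = 2 * (\<sigma> * z - lam * (z + al) / \<sigma>)"
      by (simp add: \<sigma>_def poly_a_eq)
    also have "\<dots> = A * z + B" unfolding A_def B_def using sigma_nonzero
      by (simp add: field_simps)
    finally show ?thesis .
  qed
  have I2: "poly (i (-1)) z = A' * z + B'" for z
  proof -
    have "poly (i (-1)) z = 2 / of_int (-1) * (g_odd (-1) * z - poly (a (-1)) z / g_odd (-1))"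
      by (rule poly_i_odd) simp
    also have "\<dots> = - 2 * (\<sigma> / lam * z - (z - al) / \<sigma>)"
      using lam_nonzero by (simp add: g_odd_neg1 poly_a_eq power_int_minus inverse_eq_divide)
    also have "\<dots> = A' * z + B'" unfolding A'_def B'_def
      by (simp add: algebra_simps diff_divide_distrib)
    finally show ?thesis .
  qed
  have R: "(A' * (z + 1/2) + B') * (A * z + B) = (A * (z + -1/2) + B) * (A' * z + B')" for z
    using arg_cong[OF i_commute, of "\<lambda>p. poly p z"]
    by (simp only: poly_mult poly_pshift I1 I2)
  have "A * A' = 0" using R[of 0] R[of 1] by algebra
  then have "A = 0 \<or> A' = 0" by simp
  then show ?thesis
  proof
    assume "A = 0"
    then show ?thesis unfolding A_def using sigma_nonzero by (simp add: field_simps)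
  next
    assume "A' = 0"
    then show ?thesis unfolding A'_def using sigma_nonzero lam_nonzero by (simp add: field_simps)
  qed
qed

lemma lam_powi_sigma: "lam powi m = \<sigma> powi m * \<sigma> powi m"
proof -
  have "lam powi m = (\<sigma> * \<sigma>) powi m" using sigma_squared by simp
  then show ?thesis by (simp only: power_int_mult_distrib)
qed

lemma sigma_powi_double: "\<sigma> powi (2*m) = \<sigma> powi m * \<sigma> powi m"
proof -
  have "\<sigma> powi (2*m) = \<sigma> powi (m + m)" by (simp only: mult_2)
  also have "\<dots> = \<sigma> powi m * \<sigma> powi m"
    by (rule power_int_add) (simp add: sigma_nonzero)
  finally show ?thesis .
qed

lemma sigma_powi_double': "\<sigma> powi (m*2) = \<sigma> powi m * \<sigma> powi m"
  using sigma_powi_double[of m] by (simp only: mult.commute)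

lemma sigma_powi_nonzero: "\<sigma> powi m \<noteq> 0" using sigma_nonzero
  by (simp add: power_int_not_zero)

lemma g_solution: "g k = [:\<sigma> powi k:]"
proof (cases "even k")
  case True
  then obtain m where k: "k = 2*m" by blast
  show ?thesis by (simp add: k g_even gam_eq_powi lam_powi_sigma sigma_powi_double)
next
  case False
  then obtain n where k: "k = 2*n+1" by (metis oddE)
  have "g k = [:g_odd k:]" using False by (rule g_odd_const)
  also have "g_odd k = \<sigma> powi k"
    using sigma_nonzero
    by (simp add: k g_odd_eq_powi lam_powi_sigma sigma_powi_double power_int_add_1)
  finally show ?thesis .
qed

lemma h_solution: "h k = smult ((-1) powi k * \<sigma> powi k) [:of_int k * al, 1:]"
proof (rule poly_ext)
  fix z
  show "poly (h k) z = poly (smult ((-1) powi k * \<sigma> powi k) [:of_int k * al, 1:]) z"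
  proof (cases "even k")
    case True
    then obtain m where k: "k = 2*m" by blast
    have "poly (h k) z = lam powi m * (z + 2 * of_int m * al)" by (simp only: k poly_h_even_eq)
    then show ?thesis using True
      by (simp add: k lam_powi_sigma sigma_powi_double sigma_powi_double' algebra_simps)
  next
    case False
    have "g_odd k = \<sigma> powi k" using g_solution[of k] g_odd_const[OF False] by simp
    then have "poly (h k) z = - (\<sigma> powi k * \<sigma> powi k * (z + of_int k * al)) / \<sigma> powi k"
      using poly_h_odd[OF False] by (simp add: poly_a_eq lam_powi_sigma)
    then show ?thesis using False sigma_powi_nonzero[of k] sigma_nonzero
      by (simp add: algebra_simps)
  qed
qed

lemma a_solution: "a m = smult (\<sigma> powi (2*m)) [:of_int m * al, 1:]"
  by (rule poly_ext) (simp add: poly_a_eq lam_powi_sigma sigma_powi_double sigma_powi_double' algebra_simps)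

lemma b_solution: "b m = smult (\<sigma> powi (2*m)) [:of_int m * (al + 1/2), 1:]"
  by (rule poly_ext) (simp add: poly_b_eq lam_powi_sigma sigma_powi_double sigma_powi_double' algebra_simps)

lemma i_solution: assumes k: "odd k" shows "i k = [:- 2 * \<sigma> powi k * al:]"
proof (rule poly_eqI_const)
  fix z
  have "g_odd k = \<sigma> powi k" using g_solution[of k] g_odd_const[OF k] by simp
  then have "poly (i k) z = 2 / of_int k * (\<sigma> powi k * z - \<sigma> powi k * \<sigma> powi k * (z + of_int k * al) / \<sigma> powi k)"
    by (simp add: poly_i_odd[OF k] poly_a_eq lam_powi_sigma)
  also have "\<dots> = 2 / of_int k * (\<sigma> powi k * z - \<sigma> powi k * (z + of_int k * al))"
    using sigma_powi_nonzero[of k] by simp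
  also have "\<dots> = 2 / of_int k * (- (of_int k * (\<sigma> powi k * al)))"
    by (simp add: algebra_simps)
  also have "\<dots> = - 2 * \<sigma> powi k * al" using of_int_odd_nonzero[OF k] by simp
  finally show "poly (i k) z = - 2 * \<sigma> powi k * al" .
qed

lemma j_solution: assumes k: "odd k" shows "j k = [:\<sigma> powi k * (1 - 2 * al):]"
proof (rule poly_eqI_const)
  fix z
  have "g_odd k = \<sigma> powi k" using g_solution[of k] g_odd_const[OF k] by simp
  then have "poly (j k) z = 2 / of_int k * (- (\<sigma> powi k * \<sigma> powi k * (z + of_int k * al)) / \<sigma> powi k + (z + of_int k / 2) * \<sigma> powi k)"
    by (simp add: poly_j_odd[OF k] poly_a_eq lam_powi_sigma)
  also have "\<dots> = 2 / of_int k * (- (\<sigma> powi k * (z + of_int k * al)) + (z + of_int k / 2) * \<sigma> powi k)"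
    using sigma_powi_nonzero[of k] by simp
  also have "\<dots> = 2 / of_int k * (of_int k * (\<sigma> powi k * (1 - 2 * al)) / 2)"
    by (simp add: algebra_simps)
  also have "\<dots> = \<sigma> powi k * (1 - 2 * al)" using of_int_odd_nonzero[OF k] by simp
  finally show "poly (j k) z = \<sigma> powi k * (1 - 2 * al)" .
qed

theorem solution: "\<exists>s al. s \<noteq> 0 \<and> (\<forall>k. g k = [:s powi k:]) \<and>
  (\<forall>k. h k = smult ((-1) powi k * s powi k) [:of_int k * al, 1:]) \<and>
  (\<forall>m. a m = smult (s powi (2*m)) [:of_int m * al, 1:]) \<and>
  (\<forall>m. b m = smult (s powi (2*m)) [:of_int m * (al + 1/2), 1:]) \<and>
  (\<forall>k. odd k \<longrightarrow> i k = [:- 2 * s powi k * al:]) \<and>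
  (\<forall>k. odd k \<longrightarrow> j k = [:s powi k * (1 - 2 * al):])"
  using sigma_nonzero g_solution h_solution a_solution b_solution i_solution j_solution by blast

end

section \<open>The isomorphism with \<open>N\<^sub>t(\<lambda>, \<alpha>)\<close>\<close>

lemma vector_space_Nsc: "vector_space Nsc"
proof
  fix a b :: complex and x y :: "complex poly \<times> complex poly"
  show "Nsc a (x + y) = Nsc a x + Nsc a y" by (cases x, cases y) (simp add: Nsc_def smult_add_right)
  show "Nsc (a + b) x = Nsc a x + Nsc b x" by (cases x) (simp add: Nsc_def smult_add_left)
  show "Nsc a (Nsc b x) = Nsc (a * b) x" by (cases x) (simp add: Nsc_def)
  show "Nsc 1 x = x" by (cases x) (simp add: Nsc_def)
qed

text \<open>\<open>lampow\<close> is built on the fixed root \<open>csqrt\<close>; \<open>t\<close> records whether \<open>s\<close> is that root or its negative.\<close>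

lemma lampow_square:
  fixes s :: complex
  assumes s: "s \<noteq> 0"
  obtains t where "t = 1 \<or> t = -1" "\<And>k. t powi k * lampow (s * s) k = s powi k"
    "\<And>m. lampow (s * s) (2 * m) = s powi (2 * m)"
proof -
  define r where "r = csqrt (s * s)"
  define t :: complex where "t = (if r = s then 1 else -1)"
  have rr: "r * r = s * s" using power2_csqrt[of "s * s"] by (simp add: r_def power2_eq_square)
  then have "(r - s) * (r + s) = 0" by (simp add: algebra_simps)
  then have "r = s \<or> r = - s" by (simp add: eq_neg_iff_add_eq_0)
  then have tr: "t * r = s" using s by (auto simp: t_def)
  have lp: "lampow (s * s) k = r powi k" for k by (simp add: lampow_def r_def)
  show ?thesis
  proof (rule that)
    show "t = 1 \<or> t = -1" by (simp add: t_def)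
    show "t powi k * lampow (s * s) k = s powi k" for k
      using tr by (simp add: lp flip: power_int_mult_distrib)
    show "lampow (s * s) (2 * m) = s powi (2 * m)" for m
    proof -
      have "lampow (s * s) (2 * m) = (r powi 2) powi m" by (simp add: lp power_int_mult)
      also have "\<dots> = (s powi 2) powi m" using rr by (simp add: power2_eq_square)
      also have "\<dots> = s powi (2 * m)" by (simp add: power_int_mult)
      finally show ?thesis .
    qed
  qed
qed

locale tmodule_basis = free_tmodule +
  fixes e0
  assumes e0_V0: "e0 \<in> V0" and e0_nonzero: "e0 \<noteq> 0"
    and generates_V0: "generates V0 e0" and generates_V1: "generates V1 (G 0 e0)"
begin

definition e1 where "e1 = G 0 e0"

lemma e1_V1: "e1 \<in> V1" unfolding e1_def by (rule G_V0[OF e0_V0])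
lemma e1_nonzero: "e1 \<noteq> 0" unfolding e1_def using G0_eq_0D e0_nonzero by blast
lemma e0_generates: "v \<in> V0 \<Longrightarrow> \<exists>f. v = pact f e0"
  using generates_V0 by (simp add: generates_def)
lemma e1_generates: "v \<in> V1 \<Longrightarrow> \<exists>f. v = pact f e1"
  using generates_V1 by (simp add: generates_def e1_def)

definition coord0 where "coord0 v = (SOME f. v = pact f e0)"
definition coord1 where "coord1 v = (SOME f. v = pact f e1)"

lemma coord0: "v \<in> V0 \<Longrightarrow> v = pact (coord0 v) e0"
  unfolding coord0_def by (rule someI_ex) (rule e0_generates)
lemma coord1: "v \<in> V1 \<Longrightarrow> v = pact (coord1 v) e1"
  unfolding coord1_def by (rule someI_ex) (rule e1_generates)

lemma pact_cancel_e0: "pact f e0 = pact f' e0 \<Longrightarrow> f = f'"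
  using pact_cancel e0_nonzero by blast
lemma pact_cancel_e1: "pact f e1 = pact f' e1 \<Longrightarrow> f = f'"
  using pact_cancel e1_nonzero by blast

definition "ca m = coord0 (L m e0)"
definition "cb m = coord1 (L m e1)"
definition "cg k = coord1 (G k e0)"
definition "ch k = coord0 (G k e1)"
definition "ci k = coord0 (I k e0)"
definition "cj k = coord1 (I k e1)"

lemma L_e0: "L m e0 = pact (ca m) e0" unfolding ca_def by (rule coord0) (rule L_V0[OF e0_V0])
lemma L_e1: "L m e1 = pact (cb m) e1" unfolding cb_def by (rule coord1) (rule L_V1[OF e1_V1])
lemma G_e0: "G k e0 = pact (cg k) e1" unfolding cg_def by (rule coord1) (rule G_V0[OF e0_V0])
lemma G_e1: "G k e1 = pact (ch k) e0" unfolding ch_def by (rule coord0) (rule G_V1[OF e1_V1])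
lemma I_e0: "odd k \<Longrightarrow> I k e0 = pact (ci k) e0" unfolding ci_def
  by (rule coord0) (rule I_V0[OF _ e0_V0])
lemma I_e1: "odd k \<Longrightarrow> I k e1 = pact (cj k) e1" unfolding cj_def
  by (rule coord1) (rule I_V1[OF _ e1_V1])

lemma L_pact_e0: "L m (pact f e0) = pact (pshift f (of_int m) * ca m) e0"
  by (simp add: L_pact L_e0 pact_mult)
lemma L_pact_e1: "L m (pact f e1) = pact (pshift f (of_int m) * cb m) e1"
  by (simp add: L_pact L_e1 pact_mult)
lemma G_pact_e0: "G k (pact f e0) = pact (pshift f (of_int k / 2) * cg k) e1"
  by (simp add: G_pact G_e0 pact_mult)
lemma G_pact_e1: "G k (pact f e1) = pact (pshift f (of_int k / 2) * ch k) e0"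
  by (simp add: G_pact G_e1 pact_mult)
lemma I_pact_e0: "odd k \<Longrightarrow> I k (pact f e0) = pact (pshift f (of_int k / 2) * ci k) e0"
  by (simp add: I_pact I_e0 pact_mult)
lemma I_pact_e1: "odd k \<Longrightarrow> I k (pact f e1) = pact (pshift f (of_int k / 2) * cj k) e1"
  by (simp add: I_pact I_e1 pact_mult)

lemma G0_e1: "G 0 e1 = pact [:0,1:] e0" by (simp add: e1_def G0_G0 pact_x)

lemma cg_0: "cg 0 = 1"
proof (rule pact_cancel_e1)
  have "pact (cg 0) e1 = G 0 e0" by (rule G_e0[symmetric])
  also have "\<dots> = e1" by (rule e1_def[symmetric])
  also have "\<dots> = pact 1 e1" by simp
  finally show "pact (cg 0) e1 = pact 1 e1" .
qed

lemma G0_e0: "G 0 e0 = e1" by (rule e1_def[symmetric])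
lemma ch_0: "ch 0 = [:0,1:]"
  by (rule pact_cancel_e0) (simp add: G_e1[symmetric] G0_e1)

lemma ca_GG: "ca k = smult ((-1) powi k) (pshift (cg k) (of_int k / 2) * ch k)"
proof -
  have "G k (G k e0) + G k (G k e0) = sc ((-1) powi k * 2) (L ((k + k) div 2) e0)"
    by (rule anticomm_G_G_int) simp
  then have "pact (pshift (cg k) (of_int k / 2) * ch k) e0 + pact (pshift (cg k) (of_int k / 2) * ch k) e0
      = sc ((-1) powi k * 2) (pact (ca k) e0)"
    by (simp add: G_e0 G_pact_e1 L_e0)
  then have "pshift (cg k) (of_int k / 2) * ch k = smult ((-1) powi k) (ca k)"
    using e0_nonzero by (rule pact_twice_cancel)
  then show ?thesis by simp
qed

lemma cb_GG: "cb k = smult ((-1) powi k) (pshift (ch k) (of_int k / 2) * cg k)"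
proof -
  have "G k (G k e1) + G k (G k e1) = sc ((-1) powi k * 2) (L ((k + k) div 2) e1)"
    by (rule anticomm_G_G_int) simp
  then have "pact (pshift (ch k) (of_int k / 2) * cg k) e1 + pact (pshift (ch k) (of_int k / 2) * cg k) e1
      = sc ((-1) powi k * 2) (pact (cb k) e1)"
    by (simp add: G_e1 G_pact_e0 L_e1)
  then have "pshift (ch k) (of_int k / 2) * cg k = smult ((-1) powi k) (cb k)"
    using e1_nonzero by (rule pact_twice_cancel)
  then show ?thesis by simp
qed

lemma pact_smult_x: "pact (smult c [:0, 1:]) v = sc c (L 0 v)"
  by (simp only: pact_smult pact_x)

lemma cg_ch_anticomm:
  "pshift (cg (-k)) (of_int k / 2) * ch k + pshift (cg k) (of_int (-k) / 2) * ch (-k)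
    = smult ((-1) powi k * 2) [:0, 1:]" (is "?l = ?r")
proof (rule pact_cancel_e0)
  have "G k (G (-k) e0) + G (-k) (G k e0) = sc ((-1) powi k * 2) (L ((k + -k) div 2) e0)"
    by (rule anticomm_G_G_int) simp
  then show "pact ?l e0 = pact ?r e0"
    by (simp only: G_e0 G_pact_e1 pact_poly_add pact_smult_x) simp
qed

lemma ch_cg_anticomm:
  "pshift (ch (-k)) (of_int k / 2) * cg k + pshift (ch k) (of_int (-k) / 2) * cg (-k)
    = smult ((-1) powi k * 2) [:0, 1:]" (is "?l = ?r")
proof (rule pact_cancel_e1)
  have "G k (G (-k) e1) + G (-k) (G k e1) = sc ((-1) powi k * 2) (L ((k + -k) div 2) e1)"
    by (rule anticomm_G_G_int) simp
  then show "pact ?l e1 = pact ?r e1"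
    by (simp only: G_e1 G_pact_e0 pact_poly_add pact_smult_x) simp
qed

lemma cb_minus_ca: "cb m - ca m = smult (of_int m / 2) (cg (2 * m))" (is "?l = ?r")
proof (rule pact_cancel_e1)
  have "L m (G 0 e0) - G 0 (L m e0) = sc (of_int (m - 0) / 2) (G (2 * m + 0) e0)"
    by (rule comm_L_G)
  then show "pact ?l e1 = pact ?r e1"
    by (simp only: G0_e0 L_e1 L_e0 G0_pact pact_poly_diff pact_smult) (simp add: G_e0)
qed

lemma x_ca_minus_cb_x:
  "pshift [:0, 1:] (of_int m) * ca m - cb m * [:0, 1:] = smult (of_int m / 2) (ch (2 * m))"
  (is "?l = ?r")
proof (rule pact_cancel_e0)
  have "L m (G 0 e1) - G 0 (L m e1) = sc (of_int (m - 0) / 2) (G (2 * m + 0) e1)"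
    by (rule comm_L_G)
  then show "pact ?l e0 = pact ?r e0"
    by (simp only: G0_e1 L_pact_e0 L_e1 G0_pact pact_mult pact_poly_diff pact_smult) (simp add: G_e1)
qed

lemma cg_comm_L:
  "pshift (cg k) (of_int m) * cb m - pshift (ca m) (of_int k / 2) * cg k
    = smult (of_int (m - k) / 2) (cg (2 * m + k))" (is "?l = ?r")
proof (rule pact_cancel_e1)
  have "L m (G k e0) - G k (L m e0) = sc (of_int (m - k) / 2) (G (2 * m + k) e0)"
    by (rule comm_L_G)
  then show "pact ?l e1 = pact ?r e1"
    by (simp only: G_e0 L_pact_e1 L_e0 G_pact_e0 pact_poly_diff pact_smult)
qed

lemma ch_comm_L:
  "pshift (ch k) (of_int m) * ca m - pshift (cb m) (of_int k / 2) * ch k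
    = smult (of_int (m - k) / 2) (ch (2 * m + k))" (is "?l = ?r")
proof (rule pact_cancel_e0)
  have "L m (G k e1) - G k (L m e1) = sc (of_int (m - k) / 2) (G (2 * m + k) e1)"
    by (rule comm_L_G)
  then show "pact ?l e0 = pact ?r e0"
    by (simp only: G_e1 L_pact_e0 L_e1 G_pact_e1 pact_poly_diff pact_smult)
qed

lemma ci_GG:
  assumes k: "odd k"
  shows "cg k * [:0, 1:] + ch k = smult (of_int k / 2) (ci k)" (is "?l = ?r")
proof (rule pact_cancel_e0)
  have "G 0 (G k e0) + G k (G 0 e0) = sc ((-1) powi (0 + 1) * (of_int (0 - k) / 2)) (I (0 + k) e0)"
    by (rule anticomm_G_G_half) (simp add: k)
  moreover have "G 0 (G k e0) = pact (cg k * [:0, 1:]) e0"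
    by (simp only: G_e0 G0_pact G0_e1 pact_mult)
  moreover have "G k (G 0 e0) = pact (ch k) e0" by (simp only: G0_e0 G_e1)
  ultimately show "pact ?l e0 = pact ?r e0" by (simp add: I_e0[OF k] pact_poly_add pact_smult)
qed

lemma cj_GG:
  assumes k: "odd k"
  shows "ch k + pshift [:0, 1:] (of_int k / 2) * cg k = smult (of_int k / 2) (cj k)" (is "?l = ?r")
proof (rule pact_cancel_e1)
  have "G 0 (G k e1) + G k (G 0 e1) = sc ((-1) powi (0 + 1) * (of_int (0 - k) / 2)) (I (0 + k) e1)"
    by (rule anticomm_G_G_half) (simp add: k)
  moreover have "G 0 (G k e1) = pact (ch k) e1" by (simp only: G_e1 G0_pact G0_e0)
  moreover have "G k (G 0 e1) = pact (pshift [:0, 1:] (of_int k / 2) * cg k) e1"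
    by (simp only: G0_e1 G_pact_e0)
  ultimately show "pact ?l e1 = pact ?r e1" by (simp add: I_e1[OF k] pact_poly_add pact_smult)
qed

lemma ci_commute: "pshift (ci (-1)) (1 / 2) * ci 1 = pshift (ci 1) (-1 / 2) * ci (-1)"
proof (rule pact_cancel_e0)
  have odd: "odd (1 :: int)" "odd (-1 :: int)" by simp_all
  have "I 1 (I (-1) e0) - I (-1) (I 1 e0) = 0" by (rule comm_I_I) auto
  then show "pact (pshift (ci (-1)) (1 / 2) * ci 1) e0 = pact (pshift (ci 1) (-1 / 2) * ci (-1)) e0"
    by (simp add: I_e0[OF odd(1)] I_e0[OF odd(2)] I_pact_e0[OF odd(1)] I_pact_e0[OF odd(2)])
qed

sublocale structure_polys ca cb cg ch ci cj
  by unfold_locales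
    (fact cg_0 ch_0 ca_GG cb_GG cg_ch_anticomm ch_cg_anticomm cb_minus_ca x_ca_minus_cb_x
      cg_comm_L ch_comm_L ci_GG cj_GG ci_commute)+

definition psi where "psi z = pact (fst z) e0 + pact (snd z) e1"

lemma psi_pair: "psi (f, g) = pact f e0 + pact g e1" by (simp add: psi_def)

lemma psi_add: "psi (z + z') = psi z + psi z'"
  by (simp add: psi_def pact_poly_add algebra_simps)

lemma psi_scale: "psi (Nsc c z) = sc c (psi z)"
  by (cases z) (simp add: psi_def Nsc_def pact_smult scale_right_distrib)

lemma psi_inj: "inj psi"
proof (rule injI)
  fix x y assume h: "psi x = psi y"
  obtain f g where x: "x = (f, g)" by (cases x)
  obtain f' g' where y: "y = (f', g')" by (cases y)
  have "(pact f e0 - pact f' e0) + (pact g e1 - pact g' e1) = 0" using h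
    by (simp add: x y psi_def algebra_simps)
  moreover have "pact f e0 - pact f' e0 \<in> V0"
    by (intro subspace_diff[OF subspace_V0] pact_V0 e0_V0)
  moreover have "pact g e1 - pact g' e1 \<in> V1"
    by (intro subspace_diff[OF subspace_V1] pact_V1 e1_V1)
  ultimately have "pact f e0 - pact f' e0 = 0" "pact g e1 - pact g' e1 = 0"
    using graded_sum_eq_0 by blast+
  then have "f = f'" "g = g'" using pact_cancel_e0 pact_cancel_e1 by auto
  then show "x = y" by (simp add: x y)
qed

lemma psi_surj: "surj psi"
proof -
  have "v \<in> range psi" for v
  proof -
    obtain a b where ab: "a \<in> V0" "b \<in> V1" "v = a + b" using V0_plus_V1[of v] by blast
    obtain f where f: "a = pact f e0" using e0_generates[OF ab(1)] by blast
    obtain g where g: "b = pact g e1" using e1_generates[OF ab(2)] by blast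
    have "v = psi (f, g)" by (simp add: psi_pair ab(3) f g)
    then show ?thesis by blast
  qed
  then show ?thesis by blast
qed

lemma psi_bij: "bij psi" using psi_inj psi_surj by (simp add: bij_def)

lemma inv_psi_intertwines:
  assumes "\<And>z. psi (T' z) = T (psi z)"
  shows "inv psi (T v) = T' (inv psi v)"
proof -
  have "T v = T (psi (inv psi v))" by (simp add: surj_f_inv_f[OF psi_surj])
  also have "\<dots> = psi (T' (inv psi v))" by (simp add: assms)
  finally show ?thesis by (simp add: inv_f_f[OF psi_inj])
qed

lemma linear_inv_psi: "Vector_Spaces.linear sc Nsc (inv psi)"
proof (rule Vector_Spaces.linear_iff[THEN iffD2], intro conjI allI vector_space vector_space_Nsc)
  fix x y
  have "psi (inv psi x + inv psi y) = x + y" by (simp add: psi_add surj_f_inv_f[OF psi_surj])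
  then show "inv psi (x + y) = inv psi x + inv psi y" by (metis inv_f_f[OF psi_inj])
next
  fix c x
  have "psi (Nsc c (inv psi x)) = sc c x" by (simp add: psi_scale surj_f_inv_f[OF psi_surj])
  then show "inv psi (sc c x) = Nsc c (inv psi x)" by (metis inv_f_f[OF psi_inj])
qed

lemma psi_Neven: "psi ` Neven = V0"
proof
  show "psi ` Neven \<subseteq> V0" by (auto simp: Neven_def psi_pair pact_V0 e0_V0)
  show "V0 \<subseteq> psi ` Neven"
  proof
    fix v assume "v \<in> V0"
    then obtain f where "v = pact f e0" using e0_generates by blast
    then have "v = psi (f, 0)" by (simp add: psi_pair)
    then show "v \<in> psi ` Neven" by (auto simp: Neven_def)
  qed
qed

lemma psi_Nodd: "psi ` Nodd = V1"
proof
  show "psi ` Nodd \<subseteq> V1" by (auto simp: Nodd_def psi_pair pact_V1 e1_V1)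
  show "V1 \<subseteq> psi ` Nodd"
  proof
    fix v assume "v \<in> V1"
    then obtain g where "v = pact g e1" using e1_generates by blast
    then have "v = psi (0, g)" by (simp add: psi_pair)
    then show "v \<in> psi ` Nodd" by (auto simp: Nodd_def)
  qed
qed

lemma psi_NL:
  assumes A: "\<And>m. ca m = smult (lampow lm (2*m)) [:of_int m * aa, 1:]"
    and B: "\<And>m. cb m = smult (lampow lm (2*m)) [:of_int m * (aa + 1/2), 1:]"
  shows "psi (NL lm aa m z) = L m (psi z)"
proof -
  obtain f g where z: "z = (f, g)" by (cases z)
  have "L m (psi z) = pact (pshift f (of_int m) * ca m) e0 + pact (pshift g (of_int m) * cb m) e1"
    by (simp add: z psi_pair linear_add[OF linear_L] L_pact_e0 L_pact_e1)
  also have "\<dots> = psi (NL lm aa m z)"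
    by (simp only: A B mult_smult_right_commute) (simp add: z psi_pair NL_def)
  finally show ?thesis by simp
qed

lemma psi_NI:
  assumes k: "odd k"
    and A: "ci k = [:- 2 * (t powi k) * lampow lm k * aa:]"
    and B: "cj k = [:(t powi k) * lampow lm k * (1 - 2 * aa):]"
  shows "psi (NI t lm aa k z) = I k (psi z)"
proof -
  obtain f g where z: "z = (f, g)" by (cases z)
  have "I k (psi z) = pact (pshift f (of_int k / 2) * ci k) e0 + pact (pshift g (of_int k / 2) * cj k) e1"
    by (simp add: z psi_pair linear_add[OF linear_I[OF k]] I_pact_e0[OF k] I_pact_e1[OF k])
  also have "\<dots> = psi (NI t lm aa k z)"
    by (simp only: A B mult_const_right) (simp add: z psi_pair NI_def)
  finally show ?thesis by simp
qed

lemma psi_NG: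
  assumes A: "cg k = [:(t powi k) * lampow lm k:]"
    and B: "ch k = smult (((- t) powi k) * lampow lm k) [:of_int k * aa, 1:]"
  shows "psi (NG t lm aa k z) = G k (psi z)"
proof -
  obtain f g where z: "z = (f, g)" by (cases z)
  have "G k (psi z) = pact (pshift g (of_int k / 2) * ch k) e0 + pact (pshift f (of_int k / 2) * cg k) e1"
    by (simp add: z psi_pair linear_add[OF linear_G] G_pact_e0 G_pact_e1 add.commute)
  also have "\<dots> = psi (NG t lm aa k z)"
    by (simp only: A B mult_const_right mult_smult_right_commute) (simp add: z psi_pair NG_def)
  finally show ?thesis by simp
qed

lemma tiso_N_of_structure_polys:
  assumes a: "\<And>m. ca m = smult (lampow lm (2*m)) [:of_int m * aa, 1:]"
    and b: "\<And>m. cb m = smult (lampow lm (2*m)) [:of_int m * (aa + 1/2), 1:]"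
    and g: "\<And>k. cg k = [:(t powi k) * lampow lm k:]"
    and h: "\<And>k. ch k = smult (((- t) powi k) * lampow lm k) [:of_int k * aa, 1:]"
    and i: "\<And>k. odd k \<Longrightarrow> ci k = [:- 2 * (t powi k) * lampow lm k * aa:]"
    and j: "\<And>k. odd k \<Longrightarrow> cj k = [:(t powi k) * lampow lm k * (1 - 2 * aa):]"
  shows "tiso sc V0 V1 L I G Nsc Neven Nodd (NL lm aa) (NI t lm aa) (NG t lm aa)"
  unfolding tiso_def
proof (rule exI[of _ "inv psi"], intro conjI allI impI)
  show "Vector_Spaces.linear sc Nsc (inv psi)" by (rule linear_inv_psi)
  show "bij (inv psi)" by (rule bij_imp_bij_inv[OF psi_bij])
  show "inv psi ` V0 = Neven" by (simp flip: psi_Neven add: image_inv_f_f[OF psi_inj])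
  show "inv psi ` V1 = Nodd" by (simp flip: psi_Nodd add: image_inv_f_f[OF psi_inj])
  fix m v show "inv psi (L m v) = NL lm aa m (inv psi v)"
    by (rule inv_psi_intertwines) (rule psi_NL[OF a b])
next
  fix k :: int and v assume k: "odd k"
  show "inv psi (I k v) = NI t lm aa k (inv psi v)"
    by (rule inv_psi_intertwines) (rule psi_NI[OF k i[OF k] j[OF k]])
next
  fix k :: int and v show "inv psi (G k v) = NG t lm aa k (inv psi v)"
    by (rule inv_psi_intertwines) (rule psi_NG[OF g h])
qed

lemma tiso_N: "\<exists>lam al t. lam \<noteq> 0 \<and> (t = 1 \<or> t = -1) \<and>
   tiso sc V0 V1 L I G Nsc Neven Nodd (NL lam al) (NI t lam al) (NG t lam al)"
proof -
  obtain s aa where s: "s \<noteq> 0" and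
    g: "\<And>k. cg k = [:s powi k:]" and
    h: "\<And>k. ch k = smult ((-1) powi k * s powi k) [:of_int k * aa, 1:]" and
    a: "\<And>m. ca m = smult (s powi (2*m)) [:of_int m * aa, 1:]" and
    b: "\<And>m. cb m = smult (s powi (2*m)) [:of_int m * (aa + 1/2), 1:]" and
    i: "\<And>k. odd k \<Longrightarrow> ci k = [:- 2 * s powi k * aa:]" and
    j: "\<And>k. odd k \<Longrightarrow> cj k = [:s powi k * (1 - 2 * aa):]"
    using solution by blast
  obtain t where t: "t = 1 \<or> t = -1" and st: "\<And>k. t powi k * lampow (s * s) k = s powi k"
    and s2: "\<And>m. lampow (s * s) (2 * m) = s powi (2 * m)"
    using lampow_square[OF s] by blast
  have st': "(- t) powi k * lampow (s * s) k = (-1) powi k * s powi k" for k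
  proof -
    have "(- t) powi k = (-1) powi k * t powi k" by (simp add: power_int_minus_left)
    then show ?thesis using st[of k] by (simp add: mult.assoc)
  qed
  have "tiso sc V0 V1 L I G Nsc Neven Nodd (NL (s * s) aa) (NI t (s * s) aa) (NG t (s * s) aa)"
  proof (rule tiso_N_of_structure_polys)
    show "ca m = smult (lampow (s * s) (2 * m)) [:of_int m * aa, 1:]" for m by (simp add: a s2)
    show "cb m = smult (lampow (s * s) (2 * m)) [:of_int m * (aa + 1/2), 1:]" for m
      by (simp add: b s2)
    show "cg k = [:t powi k * lampow (s * s) k:]" for k using g[of k] st[of k] by simp
    show "ch k = smult ((- t) powi k * lampow (s * s) k) [:of_int k * aa, 1:]" for k
      using h[of k] st'[of k] by simp
    show "ci k = [:- 2 * t powi k * lampow (s * s) k * aa:]" if "odd k" for k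
      using i[OF that] st[of k] by (simp add: mult.assoc)
    show "cj k = [:t powi k * lampow (s * s) k * (1 - 2 * aa):]" if "odd k" for k
      using j[OF that] st[of k] by simp
  qed
  moreover have "s * s \<noteq> 0" using s by simp
  ultimately show ?thesis using t by blast
qed

end

theorem theorem4p3:
  fixes sc :: "complex \<Rightarrow> 'v::ab_group_add \<Rightarrow> 'v"
    and V0 V1 :: "'v set"
    and L I G :: "int \<Rightarrow> 'v \<Rightarrow> 'v"
  assumes "tmod sc V0 V1 L I G"
    and "free_rank2_L0 sc L"
  shows "\<exists>lam al t. lam \<noteq> 0 \<and> (t = 1 \<or> t = -1) \<and>
           (tiso sc V0 V1 L I G Nsc Neven Nodd (NL lam al) (NI t lam al) (NG t lam al) \<or>
            tiso sc V1 V0 L I G Nsc Neven Nodd (NL lam al) (NI t lam al) (NG t lam al))"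
proof -
  have W: "free_tmodule sc V0 V1 L I G"
    by (rule free_tmodule.intro[OF tmodule.intro[OF assms(1)] free_tmodule_axioms.intro[OF assms(2)]])
  have \<Pi>W: "free_tmodule sc V1 V0 L I G"
    by (rule free_tmodule.intro[OF tmodule.intro[OF tmod_swap[OF assms(1)]]
          free_tmodule_axioms.intro[OF assms(2)]])
  interpret free_tmodule sc V0 V1 L I G by (rule W)
  from G0_links_generators show ?thesis
  proof (elim disjE bexE conjE)
    fix e assume "e \<in> V0" "e \<noteq> 0" "generates V0 e" "generates V1 (G 0 e)"
    then interpret tmodule_basis sc V0 V1 L I G e
      by (intro tmodule_basis.intro[OF W] tmodule_basis_axioms.intro)
    from tiso_N show ?thesis by blast
  next
    fix e assume "e \<in> V1" "e \<noteq> 0" "generates V1 e" "generates V0 (G 0 e)"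
    then interpret tmodule_basis sc V1 V0 L I G e
      by (intro tmodule_basis.intro[OF \<Pi>W] tmodule_basis_axioms.intro)
    from tiso_N show ?thesis by blast
  qed
qed

end
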